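(* Fix $r\ge0$ and $n\ge0$. The map $\pi\mapsto(P_d^r(\pi),Q_d^r(\pi))$ is a bijection from $B_n$ onto the set of pairs $(P,Q)$ of standard domino tableaux of the same shape $\lambda\in\mathcal P_r(n)$. Moreover, for every $\pi\in B_n$, \[ tc(\pi)=sp(P_d^r(\pi))+sp(Q_d^r(\pi)), \] where $tc(\pi)$ is the number of barred letters of $\pi$.
   Context: Partitions are identified with Young diagrams in English notation: cell $(k,l)$ lies in row $k$ (from the top) and column $l$ (from the left). A domino is a set of two cells sharing an edge (vertical if in one column). $\delta_r=(r,r-1,\dots,1)$; every partition has a 2-core (obtained by repeatedly removing dominoes while staying a partition) equal to a unique $\delta_r$; $\mathcal P_r(n)$ is the set of partitions with 2-core $\delta_r$ and size $|\delta_r|+2n$. A standard domino tableau (SDT) of shape $\lambda\in\mathcal P_r(n)$ is a chain $\delta_r=\lambda^0\subset\cdots\subset\lambda^n=\lambda$ with each $\lambda^k/\lambda^{k-1}$ a domino; $sp(D)$ is half the number of vertical dominoes. $B_n$ is the set of words $\pi=\pi_1\cdots\pi_n$ in letters $\{1,\dots,n,\bar1,\dots,\bar n\}$ in which each $k\in[n]$ occurs exactly once, barred or unbarred. Growth diagram: $M(i,j)=1$ if $\pi_i=j$, $-1$ if $\pi_i=\bar j$, $0$ otherwise. Partitions $\lambda_{(i,j)}$, $1\le i,j\le n+1$, with $\lambda_{(1,j)}=\lambda_{(i,1)}=\delta_r$; for $i,j\in[n]$, with $\lambda=\lambda_{(i,j)},\mu=\lambda_{(i+1,j)},\nu=\lambda_{(i,j+1)}$,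 $\rho=\lambda_{(i+1,j+1)}$ is: (1) if $M(i,j)=1$ (then $\lambda=\mu=\nu$), $\lambda$ with two cells appended to its first row; (2) if $M(i,j)=-1$ (then $\lambda=\mu=\nu$), $\lambda$ with two cells appended to its first column; (3) if $M(i,j)=0$ and $\lambda=\mu$ or $\lambda=\nu$, the largest of $\lambda,\mu,\nu$; (4) otherwise, with dominoes $\gamma=\nu/\lambda$, $\gamma'=\mu/\lambda$: if disjoint, $\lambda\cup\gamma\cup\gamma'$; if they share exactly the cell $(k,l)$, $\lambda\cup\gamma\cup\gamma'\cup\{(k+1,l+1)\}$; if $\gamma=\gamma'$ vertical in column $l$, $\lambda\cup\gamma$ with two cells appended at the bottom of column $l+1$; if $\gamma=\gamma'$ horizontal in row $k$, $\lambda\cup\gamma$ with two cells appended at the end of row $k+1$. Consecutive partitions in the last row/column differ by one domino. $P_d^r(\pi)$ is the SDT given by the chain $\lambda_{(n+1,1)}\subset\cdots\subset\lambda_{(n+1,n+1)}$ and $Q_d^r(\pi)$ the SDT given by $\lambda_{(1,n+1)}\subset\cdots\subset\lambda_{(n+1,n+1)}$. *)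

theory Defs
  imports Complex_Main
begin

text \<open>Young diagrams as sets of cells (k,l), row k, column l, both 1-based (English notation).\<close>
type_synonym cells = "(nat \<times> nat) set"

definition is_partition :: "cells \<Rightarrow> bool" where
  "is_partition la \<longleftrightarrow> finite la \<and>
     (\<forall>(k,l)\<in>la. 1 \<le> k \<and> 1 \<le> l \<and>
        (\<forall>k' l'. 1 \<le> k' \<and> k' \<le> k \<and> 1 \<le> l' \<and> l' \<le> l \<longrightarrow> (k',l') \<in> la))"

definition is_domino :: "cells \<Rightarrow> bool" where
  "is_domino D \<longleftrightarrow> (\<exists>k l. 1 \<le> k \<and> 1 \<le> l \<and> (D = {(k,l),(k+1,l)} \<or> D = {(k,l),(k,l+1)}))"

definition vertical_domino :: "cells \<Rightarrow> bool" where
  "vertical_domino D \<longleftrightarrow> (\<exists>k l. 1 \<le> k \<and> 1 \<le> l \<and> D = {(k,l),(k+1,l)})"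

definition horizontal_domino :: "cells \<Rightarrow> bool" where
  "horizontal_domino D \<longleftrightarrow> (\<exists>k l. 1 \<le> k \<and> 1 \<le> l \<and> D = {(k,l),(k,l+1)})"

definition delta :: "nat \<Rightarrow> cells" where
  "delta r = {(k,l). 1 \<le> k \<and> 1 \<le> l \<and> k + l \<le> r + 1}"

definition row_len :: "cells \<Rightarrow> nat \<Rightarrow> nat" where
  "row_len la k = card {l. (k,l) \<in> la}"

definition col_len :: "cells \<Rightarrow> nat \<Rightarrow> nat" where
  "col_len la l = card {k. (k,l) \<in> la}"

definition domino_removal :: "(cells \<times> cells) set" where
  "domino_removal = {(la, mu). is_partition la \<and> is_partition mu \<and> mu \<subseteq> la \<and> is_domino (la - mu)}"

definition two_core :: "cells \<Rightarrow> cells" where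
  "two_core la = (THE mu. (la, mu) \<in> domino_removal\<^sup>* \<and> \<not> (\<exists>nu. (mu, nu) \<in> domino_removal))"

definition Pr :: "nat \<Rightarrow> nat \<Rightarrow> cells set" where
  "Pr r n = {la. is_partition la \<and> two_core la = delta r \<and> card la = card (delta r) + 2 * n}"

definition is_SDT :: "nat \<Rightarrow> cells \<Rightarrow> cells list \<Rightarrow> bool" where
  "is_SDT r la D \<longleftrightarrow> D \<noteq> [] \<and> hd D = delta r \<and> last D = la \<and>
     (\<forall>i < length D. is_partition (D ! i)) \<and>
     (\<forall>i. i + 1 < length D \<longrightarrow> D ! i \<subseteq> D ! (i+1) \<and> is_domino (D ! (i+1) - D ! i))"

definition sp :: "cells list \<Rightarrow> rat" where
  "sp D = of_nat (card {i. i + 1 < length D \<and> vertical_domino (D ! (i+1) - D ! i)}) / 2"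

datatype letter = Unb nat | Bar nat

fun letter_val :: "letter \<Rightarrow> nat" where
  "letter_val (Unb k) = k" | "letter_val (Bar k) = k"

fun is_barred :: "letter \<Rightarrow> bool" where
  "is_barred (Unb k) = False" | "is_barred (Bar k) = True"

definition Bn :: "nat \<Rightarrow> letter list set" where
  "Bn n = {w. length w = n \<and> set (map letter_val w) \<subseteq> {1..n} \<and>
              (\<forall>k\<in>{1..n}. length (filter (\<lambda>x. letter_val x = k) w) = 1)}"

definition tc :: "letter list \<Rightarrow> nat" where
  "tc w = length (filter is_barred w)"

text \<open>Matrix entry M(i,j), 1-based.\<close>
definition Mentry :: "letter list \<Rightarrow> nat \<Rightarrow> nat \<Rightarrow> int" where
  "Mentry w i j = (if w ! (i - 1) = Unb j then 1 else if w ! (i - 1) = Bar j then -1 else 0)"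

text \<open>Local rule: la = \<lambda>_(i,j), mu = \<lambda>_(i+1,j), nu = \<lambda>_(i,j+1); result \<rho> = \<lambda>_(i+1,j+1).\<close>
definition local_rule :: "int \<Rightarrow> cells \<Rightarrow> cells \<Rightarrow> cells \<Rightarrow> cells" where
  "local_rule m la mu nu =
    (if m = 1 then la \<union> {(1, row_len la 1 + 1), (1, row_len la 1 + 2)}
     else if m = -1 then la \<union> {(col_len la 1 + 1, 1), (col_len la 1 + 2, 1)}
     else if la = mu \<or> la = nu then (if la = mu then nu else mu)
     else
       (let g = nu - la; g' = mu - la in
        if g \<inter> g' = {} then la \<union> g \<union> g'
        else if card (g \<inter> g') = 1 then la \<union> g \<union> g' \<union> (\<lambda>(k,l). (k+1, l+1)) ` (g \<inter> g')
        else if g = g' \<and> vertical_domino g then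
          (let l = the_elem (snd ` g) in
           la \<union> g \<union> {(col_len (la \<union> g) (l+1) + 1, l+1), (col_len (la \<union> g) (l+1) + 2, l+1)})
        else
          (let k = the_elem (fst ` g) in
           la \<union> g \<union> {(k+1, row_len (la \<union> g) (k+1) + 1), (k+1, row_len (la \<union> g) (k+1) + 2)})))"

text \<open>Growth diagram, 0-based: grow w r i j = \<lambda>_(i+1,j+1).\<close>
fun grow :: "letter list \<Rightarrow> nat \<Rightarrow> nat \<Rightarrow> nat \<Rightarrow> cells" where
  "grow w r 0 j = delta r"
| "grow w r (Suc i) 0 = delta r"
| "grow w r (Suc i) (Suc j) =
     local_rule (Mentry w (i+1) (j+1)) (grow w r i j) (grow w r (Suc i) j) (grow w r i (Suc j))"

text \<open>P_d^r: chain \<lambda>_(n+1,1) \<subseteq> ... \<subseteq> \<lambda>_(n+1,n+1); Q_d^r: chain \<lambda>_(1,n+1) \<subseteq> ... \<subseteq> \<lambda>_(n+1,n+1).\<close>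
definition Pd :: "nat \<Rightarrow> letter list \<Rightarrow> cells list" where
  "Pd r w = map (\<lambda>j. grow w r (length w) j) [0..<length w + 1]"

definition Qd :: "nat \<Rightarrow> letter list \<Rightarrow> cells list" where
  "Qd r w = map (\<lambda>i. grow w r i (length w)) [0..<length w + 1]"

end

theory Submission
  imports Defs
begin

text \<open>
  The growth diagram of \<open>\<pi>\<close> is built square by square by the local rule, and the local rule
  can be inverted: from \<open>\<lambda>(i+1,j)\<close>, \<open>\<lambda>(i,j+1)\<close> and \<open>\<lambda>(i+1,j+1)\<close> one recovers both the entry
  \<open>M(i,j)\<close> and \<open>\<lambda>(i,j)\<close>. Hence the whole diagram, and with it \<open>\<pi>\<close>, is determined by its last row
  and column, i.e. by \<open>(P, Q)\<close>. Conversely, filling a diagram backwards from two standard domino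
  tableaux of the same shape yields a matrix with exactly one nonzero entry in each row and column,
  since along two adjacent lines the sizes agree at one end and differ by two at the other; this is
  the matrix of a word in \<open>B_n\<close>.

  The size of \<open>\<lambda>(i,j)\<close> is \<open>|\<delta>_r|\<close> plus twice the number of nonzero entries weakly north-west of
  \<open>(i,j)\<close>, so the last row and column are chains of domino additions. Their common shape has 2-core
  \<open>\<delta>_r\<close> because the chessboard colour excess is invariant under removing dominoes and separates the
  staircases. Finally, at each square the number of vertical dominoes on the two outgoing edges equals
  that on the two incoming edges, plus two when \<open>M(i,j) = -1\<close>; summing over the grid gives
  \<open>2 tc(\<pi>) = 2 sp(P) + 2 sp(Q)\<close>.
\<close>

section \<open>Young diagrams and dominoes\<close>

lemma partition_finite: "is_partition la \<Longrightarrow> finite la"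
  by (simp add: is_partition_def)

lemma partition_pos: "is_partition la \<Longrightarrow> (k, l) \<in> la \<Longrightarrow> 1 \<le> k \<and> 1 \<le> l"
  unfolding is_partition_def by blast

lemma partition_down_closed:
  "is_partition la \<Longrightarrow> (k, l) \<in> la \<Longrightarrow> 1 \<le> k' \<Longrightarrow> k' \<le> k \<Longrightarrow> 1 \<le> l' \<Longrightarrow> l' \<le> l \<Longrightarrow> (k', l') \<in> la"
  unfolding is_partition_def by blast

lemma partitionI:
  assumes "finite la" "\<And>k l. (k, l) \<in> la \<Longrightarrow> 1 \<le> k \<and> 1 \<le> l"
    and "\<And>k l k' l'. (k, l) \<in> la \<Longrightarrow> 1 \<le> k' \<Longrightarrow> k' \<le> k \<Longrightarrow> 1 \<le> l' \<Longrightarrow> l' \<le> l \<Longrightarrow> (k', l') \<in> la"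
  shows "is_partition la"
  unfolding is_partition_def using assms by blast

lemma partition_Un: "is_partition a \<Longrightarrow> is_partition b \<Longrightarrow> is_partition (a \<union> b)"
  unfolding is_partition_def by blast

lemma partition_Int: "is_partition a \<Longrightarrow> is_partition b \<Longrightarrow> is_partition (a \<inter> b)"
  unfolding is_partition_def by blast

lemma down_closed_eq_atLeastAtMost:
  fixes S :: "nat set"
  assumes fin: "finite S" and pos: "\<And>x. x \<in> S \<Longrightarrow> 1 \<le> x"
    and down: "\<And>x y. x \<in> S \<Longrightarrow> 1 \<le> y \<Longrightarrow> y \<le> x \<Longrightarrow> y \<in> S"
  shows "S = {1..card S}"
proof (cases "S = {}")
  case False
  define M where "M = Max S"
  have "S = {1..M}"
  proof
    show "S \<subseteq> {1..M}" using fin pos M_def by auto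
    show "{1..M} \<subseteq> S" using down Max_in[OF fin False] M_def by auto
  qed
  then show ?thesis by simp
qed simp

lemma mem_partition_iff_row_len:
  assumes la: "is_partition la"
  shows "(k, l) \<in> la \<longleftrightarrow> 1 \<le> l \<and> l \<le> row_len la k"
proof -
  have "finite {l. (k, l) \<in> la}"
    using finite_imageI[OF partition_finite[OF la], of snd] by (rule finite_subset[rotated]) force
  moreover have "\<And>x. x \<in> {l. (k, l) \<in> la} \<Longrightarrow> 1 \<le> x" using partition_pos[OF la] by blast
  moreover have "\<And>x y. x \<in> {l. (k, l) \<in> la} \<Longrightarrow> 1 \<le> y \<Longrightarrow> y \<le> x \<Longrightarrow> y \<in> {l. (k, l) \<in> la}"
    using partition_pos[OF la] partition_down_closed[OF la] by (metis le_refl mem_Collect_eq)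
  ultimately have "{l. (k, l) \<in> la} = {1..row_len la k}"
    unfolding row_len_def by (rule down_closed_eq_atLeastAtMost)
  then show ?thesis by (simp add: set_eq_iff)
qed

lemma mem_partition_iff_col_len:
  assumes la: "is_partition la"
  shows "(k, l) \<in> la \<longleftrightarrow> 1 \<le> k \<and> k \<le> col_len la l"
proof -
  have "finite {k. (k, l) \<in> la}"
    using finite_imageI[OF partition_finite[OF la], of fst] by (rule finite_subset[rotated]) force
  moreover have "\<And>x. x \<in> {k. (k, l) \<in> la} \<Longrightarrow> 1 \<le> x" using partition_pos[OF la] by blast
  moreover have "\<And>x y. x \<in> {k. (k, l) \<in> la} \<Longrightarrow> 1 \<le> y \<Longrightarrow> y \<le> x \<Longrightarrow> y \<in> {k. (k, l) \<in> la}"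
    using partition_pos[OF la] partition_down_closed[OF la] by (metis le_refl mem_Collect_eq)
  ultimately have "{k. (k, l) \<in> la} = {1..col_len la l}"
    unfolding col_len_def by (rule down_closed_eq_atLeastAtMost)
  then show ?thesis by (simp add: set_eq_iff)
qed

lemma partition_insert_corner:
  assumes la: "is_partition la" and kl: "1 \<le> k" "1 \<le> l"
    and up: "1 < k \<Longrightarrow> (k - 1, l) \<in> la" and left: "1 < l \<Longrightarrow> (k, l - 1) \<in> la"
  shows "is_partition (insert (k, l) la)"
proof (rule partitionI)
  fix a b a' b' assume ab: "(a, b) \<in> insert (k, l) la" and a': "1 \<le> a'" "a' \<le> a" and b': "1 \<le> b'" "b' \<le> b"
  show "(a', b') \<in> insert (k, l) la"
  proof (cases "(a, b) \<in> la")
    case True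
    then show ?thesis using partition_down_closed[OF la True a' b'] by simp
  next
    case False
    then have "a = k" "b = l" using ab by auto
    then consider "a' = k" "b' = l" | "a' < k" | "b' < l" using a' b' by linarith
    then show ?thesis
    proof cases
      case 2
      then have "(k - 1, l) \<in> la" using up a' by simp
      then show ?thesis using partition_down_closed[OF la _ a'(1), of "k - 1" l b'] 2 b' \<open>b = l\<close> by simp
    next
      case 3
      then have "(k, l - 1) \<in> la" using left b' by simp
      then show ?thesis using partition_down_closed[OF la _ a'(1), of k "l - 1" b'] 3 a' b' \<open>a = k\<close> by simp
    qed simp
  qed
qed (use la kl partition_finite partition_pos in auto)

lemma partition_remove_corner:
  assumes la: "is_partition la" and below: "(k + 1, l) \<notin> la" and right: "(k, l + 1) \<notin> la"
  shows "is_partition (la - {(k, l)})"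
proof (rule partitionI)
  fix a b a' b' assume ab: "(a, b) \<in> la - {(k, l)}" and a': "1 \<le> a'" "a' \<le> a" and b': "1 \<le> b'" "b' \<le> b"
  have "(a', b') \<noteq> (k, l)"
  proof
    assume kl: "(a', b') = (k, l)"
    then consider "k + 1 \<le> a" | "l + 1 \<le> b" using ab a' b' by fastforce
    then show False
    proof cases
      case 1
      then show False using partition_down_closed[OF la _ _ 1 _ b'(2)] ab a' b' kl below by auto
    next
      case 2
      then show False using partition_down_closed[OF la _ _ a'(2)[unfolded] _ 2] ab a' b' kl right by auto
    qed
  qed
  then show "(a', b') \<in> la - {(k, l)}" using partition_down_closed[OF la _ a' b'] ab by auto
qed (use la partition_finite partition_pos in auto)

definition vdomino :: "nat \<Rightarrow> nat \<Rightarrow> cells" where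
  "vdomino k l = {(k, l), (k + 1, l)}"

definition hdomino :: "nat \<Rightarrow> nat \<Rightarrow> cells" where
  "hdomino k l = {(k, l), (k, l + 1)}"

lemma is_domino_iff: "is_domino D \<longleftrightarrow> (\<exists>k l. 1 \<le> k \<and> 1 \<le> l \<and> (D = vdomino k l \<or> D = hdomino k l))"
  unfolding is_domino_def vdomino_def hdomino_def by blast

lemma is_dominoE:
  assumes "is_domino D"
  obtains k l where "1 \<le> k" "1 \<le> l" "D = vdomino k l" | k l where "1 \<le> k" "1 \<le> l" "D = hdomino k l"
  using assms unfolding is_domino_iff by blast

lemma is_domino_vdomino: "1 \<le> k \<Longrightarrow> 1 \<le> l \<Longrightarrow> is_domino (vdomino k l)"
  unfolding is_domino_iff by blast

lemma is_domino_hdomino: "1 \<le> k \<Longrightarrow> 1 \<le> l \<Longrightarrow> is_domino (hdomino k l)"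
  unfolding is_domino_iff by blast

lemma vertical_domino_iff: "vertical_domino D \<longleftrightarrow> (\<exists>k l. 1 \<le> k \<and> 1 \<le> l \<and> D = vdomino k l)"
  unfolding vertical_domino_def vdomino_def by blast

lemma vdomino_neq_hdomino [simp]: "vdomino a b \<noteq> hdomino c d" "hdomino c d \<noteq> vdomino a b"
  unfolding vdomino_def hdomino_def by (auto simp: doubleton_eq_iff)

lemma vdomino_eq_iff [simp]: "vdomino a b = vdomino c d \<longleftrightarrow> a = c \<and> b = d"
  unfolding vdomino_def by (auto simp: doubleton_eq_iff)

lemma hdomino_eq_iff [simp]: "hdomino a b = hdomino c d \<longleftrightarrow> a = c \<and> b = d"
  unfolding hdomino_def by (auto simp: doubleton_eq_iff)

lemma vertical_domino_vdomino [simp]: "vertical_domino (vdomino k l) \<longleftrightarrow> 1 \<le> k \<and> 1 \<le> l"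
  unfolding vertical_domino_iff by auto

lemma not_vertical_domino_hdomino [simp]: "\<not> vertical_domino (hdomino k l)"
  unfolding vertical_domino_iff by auto

lemma card_vdomino [simp]: "card (vdomino k l) = 2" and finite_vdomino [simp]: "finite (vdomino k l)"
  unfolding vdomino_def by simp_all

lemma card_hdomino [simp]: "card (hdomino k l) = 2" and finite_hdomino [simp]: "finite (hdomino k l)"
  unfolding hdomino_def by simp_all

lemma fst_vdomino: "fst ` vdomino k l = {k, k + 1}" and snd_vdomino: "snd ` vdomino k l = {l}"
  unfolding vdomino_def by auto

lemma fst_hdomino: "fst ` hdomino k l = {k}" and snd_hdomino: "snd ` hdomino k l = {l, l + 1}"
  unfolding hdomino_def by auto

lemma domino_card: "is_domino D \<Longrightarrow> finite D \<and> card D = 2"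
  by (auto elim: is_dominoE)

lemma domino_eq_if_subset: "is_domino D \<Longrightarrow> is_domino D' \<Longrightarrow> D \<subseteq> D' \<Longrightarrow> D = D'"
  using domino_card card_subset_eq by metis

lemma partition_Un_hdomino_row_end:
  assumes la: "is_partition la" and k: "1 \<le> k"
    and above: "1 < k \<Longrightarrow> (k - 1, row_len la k + 2) \<in> la"
  shows "is_partition (la \<union> hdomino k (row_len la k + 1))"
proof -
  let ?R = "row_len la k"
  have row: "\<And>b. (k, b) \<in> la \<longleftrightarrow> 1 \<le> b \<and> b \<le> ?R" using mem_partition_iff_row_len[OF la] by blast
  have above': "1 < k \<Longrightarrow> (k - 1, b) \<in> la" if "1 \<le> b" "b \<le> ?R + 2" for b
    using partition_down_closed[OF la above] that k by auto
  have first: "is_partition (insert (k, ?R + 1) la)"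
    by (rule partition_insert_corner[OF la k]) (use row above'[of "?R + 1"] in auto)
  have "is_partition (insert (k, ?R + 2) (insert (k, ?R + 1) la))"
    by (rule partition_insert_corner[OF first k]) (simp_all add: above[simplified])
  then show ?thesis unfolding hdomino_def by (simp add: insert_commute)
qed

lemma partition_Un_vdomino_col_end:
  assumes la: "is_partition la" and l: "1 \<le> l"
    and left: "1 < l \<Longrightarrow> (col_len la l + 2, l - 1) \<in> la"
  shows "is_partition (la \<union> vdomino (col_len la l + 1) l)"
proof -
  let ?C = "col_len la l"
  have col: "\<And>a. (a, l) \<in> la \<longleftrightarrow> 1 \<le> a \<and> a \<le> ?C" using mem_partition_iff_col_len[OF la] by blast
  have left': "1 < l \<Longrightarrow> (a, l - 1) \<in> la" if "1 \<le> a" "a \<le> ?C + 2" for a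
    using partition_down_closed[OF la left] that l by auto
  have first: "is_partition (insert (?C + 1, l) la)"
    by (rule partition_insert_corner[OF la _ l]) (use col left'[of "?C + 1"] in auto)
  have "is_partition (insert (?C + 2, l) (insert (?C + 1, l) la))"
    by (rule partition_insert_corner[OF first _ l]) (simp_all add: left[simplified])
  then show ?thesis unfolding vdomino_def by (simp add: insert_commute)
qed

lemma partition_Diff_hdomino_row_end:
  assumes la: "is_partition la" and L: "row_len la k = L" "2 \<le> L" and below: "(k + 1, L - 1) \<notin> la"
  shows "is_partition (la - hdomino k (L - 1))" "hdomino k (L - 1) \<subseteq> la"
proof -
  have row: "\<And>b. (k, b) \<in> la \<longleftrightarrow> 1 \<le> b \<and> b \<le> L" using mem_partition_iff_row_len[OF la] L by blast
  have "(k + 1, L) \<notin> la"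
  proof
    assume "(k + 1, L) \<in> la"
    then have "(k + 1, L - 1) \<in> la" by (rule partition_down_closed[OF la]) (use L in simp_all)
    with below show False ..
  qed
  then have first: "is_partition (la - {(k, L)})"
    by (rule partition_remove_corner[OF la]) (use row in simp)
  have "is_partition (la - {(k, L)} - {(k, L - 1)})"
    by (rule partition_remove_corner[OF first]) (use below L in auto)
  moreover have "la - {(k, L)} - {(k, L - 1)} = la - hdomino k (L - 1)"
    unfolding hdomino_def using L by auto
  ultimately show "is_partition (la - hdomino k (L - 1))" by simp
  show "hdomino k (L - 1) \<subseteq> la" unfolding hdomino_def using row L by auto
qed

lemma partition_Diff_vdomino_col_end:
  assumes la: "is_partition la" and C: "col_len la l = C" "2 \<le> C" and right: "(C - 1, l + 1) \<notin> la"
  shows "is_partition (la - vdomino (C - 1) l)" "vdomino (C - 1) l \<subseteq> la"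
proof -
  have col: "\<And>a. (a, l) \<in> la \<longleftrightarrow> 1 \<le> a \<and> a \<le> C" using mem_partition_iff_col_len[OF la] C by blast
  have right': "(C, l + 1) \<notin> la"
  proof
    assume "(C, l + 1) \<in> la"
    then have "(C - 1, l + 1) \<in> la" by (rule partition_down_closed[OF la]) (use C in simp_all)
    with right show False ..
  qed
  have first: "is_partition (la - {(C, l)})"
    by (rule partition_remove_corner[OF la _ right']) (use col in simp)
  have "is_partition (la - {(C, l)} - {(C - 1, l)})"
    by (rule partition_remove_corner[OF first]) (use right C in auto)
  moreover have "la - {(C, l)} - {(C - 1, l)} = la - vdomino (C - 1) l"
    unfolding vdomino_def using C by auto
  ultimately show "is_partition (la - vdomino (C - 1) l)" by simp
  show "vdomino (C - 1) l \<subseteq> la" unfolding vdomino_def using col C by auto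
qed

section \<open>The 2-core\<close>

lemma mem_delta [simp]: "(k, l) \<in> delta r \<longleftrightarrow> 1 \<le> k \<and> 1 \<le> l \<and> k + l \<le> r + 1"
  unfolding delta_def by simp

lemma partition_delta: "is_partition (delta r)"
proof (rule partitionI)
  show "finite (delta r)"
    by (rule finite_subset[of _ "{1..r} \<times> {1..r}"]) auto
qed auto

lemma delta_irreducible: "(delta r, nu) \<notin> domino_removal"
proof
  assume "(delta r, nu) \<in> domino_removal"
  then have nu: "is_partition nu" and D: "is_domino (delta r - nu)"
    unfolding domino_removal_def by auto
  from D show False
  proof (cases rule: is_dominoE)
    case (1 k l)
    then have "(k + 1, l) \<in> delta r - nu" "(k, l) \<in> delta r - nu" unfolding vdomino_def by auto
    moreover have "(k, l + 1) \<notin> delta r - nu" using 1(3) unfolding vdomino_def by simp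
    ultimately have "(k, l + 1) \<in> nu" by simp
    then show False using partition_down_closed[OF nu, of k "l + 1" k l] 1 \<open>(k, l) \<in> delta r - nu\<close> by auto
  next
    case (2 k l)
    then have "(k, l + 1) \<in> delta r - nu" "(k, l) \<in> delta r - nu" unfolding hdomino_def by auto
    moreover have "(k + 1, l) \<notin> delta r - nu" using 2(3) unfolding hdomino_def by simp
    ultimately have "(k + 1, l) \<in> nu" by simp
    then show False using partition_down_closed[OF nu, of "k + 1" l k l] 2 \<open>(k, l) \<in> delta r - nu\<close> by auto
  qed
qed

lemma domino_removalI:
  "is_partition la \<Longrightarrow> D \<subseteq> la \<Longrightarrow> is_domino D \<Longrightarrow> is_partition (la - D) \<Longrightarrow> (la, la - D) \<in> domino_removal"
  unfolding domino_removal_def by (auto simp: Diff_Diff_Int Int_absorb1)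

lemma partition_rtrancl_domino_removal:
  "(la, mu) \<in> domino_removal\<^sup>* \<Longrightarrow> is_partition la \<Longrightarrow> is_partition mu"
  by (induction rule: rtrancl_induct) (auto simp: domino_removal_def)

lemma irreducible_row_step:
  assumes la: "is_partition la" and irr: "\<nexists>nu. (la, nu) \<in> domino_removal"
    and kl: "(k, l) \<in> la" "2 \<le> l"
  shows "(k + 1, l - 1) \<in> la"
proof (rule ccontr)
  assume below: "(k + 1, l - 1) \<notin> la"
  define L where "L = row_len la k"
  have "l \<le> L" using kl mem_partition_iff_row_len[OF la] L_def by blast
  have "(k + 1, L - 1) \<notin> la"
  proof
    assume "(k + 1, L - 1) \<in> la"
    then have "(k + 1, l - 1) \<in> la"
      by (rule partition_down_closed[OF la]) (use kl(2) \<open>l \<le> L\<close> in auto)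
    with below show False ..
  qed
  from partition_Diff_hdomino_row_end[OF la L_def[symmetric] _ this] \<open>l \<le> L\<close> kl(2)
  have "(la, la - hdomino k (L - 1)) \<in> domino_removal"
    using partition_pos[OF la kl(1)] by (intro domino_removalI[OF la] is_domino_hdomino) auto
  with irr show False by blast
qed

lemma irreducible_col_step:
  assumes la: "is_partition la" and irr: "\<nexists>nu. (la, nu) \<in> domino_removal"
    and kl: "(k, l) \<in> la" "2 \<le> k"
  shows "(k - 1, l + 1) \<in> la"
proof (rule ccontr)
  assume right: "(k - 1, l + 1) \<notin> la"
  define C where "C = col_len la l"
  have "k \<le> C" using kl mem_partition_iff_col_len[OF la] C_def by blast
  have "(C - 1, l + 1) \<notin> la"
  proof
    assume "(C - 1, l + 1) \<in> la"
    then have "(k - 1, l + 1) \<in> la"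
      by (rule partition_down_closed[OF la]) (use kl(2) \<open>k \<le> C\<close> in auto)
    with right show False ..
  qed
  from partition_Diff_vdomino_col_end[OF la C_def[symmetric] _ this] \<open>k \<le> C\<close> kl(2)
  have "(la, la - vdomino (C - 1) l) \<in> domino_removal"
    using partition_pos[OF la kl(1)] by (intro domino_removalI[OF la] is_domino_vdomino) auto
  with irr show False by blast
qed

text \<open>Going down one row, an irreducible partition loses exactly one cell.\<close>

lemma irreducible_eq_delta:
  assumes la: "is_partition la" and irr: "\<nexists>nu. (la, nu) \<in> domino_removal"
  shows "la = delta (row_len la 1)"
proof -
  define s where "s = row_len la 1"
  have row1: "\<And>b. (1, b) \<in> la \<longleftrightarrow> 1 \<le> b \<and> b \<le> s" using mem_partition_iff_row_len[OF la] s_def by blast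
  have upper: "k + l \<le> s + 1" if "1 \<le> k" "(k, l) \<in> la" for k l
    using that
  proof (induction k arbitrary: l rule: nat_induct_at_least)
    case (Suc k)
    then have "(k, l + 1) \<in> la" using irreducible_col_step[OF la irr Suc.prems] by simp
    then show ?case using Suc.IH by fastforce
  qed (use row1 in fastforce)
  have lower: "(k, l) \<in> la" if "1 \<le> k" "1 \<le> l" "k + l \<le> s + 1" for k l
    using that
  proof (induction k arbitrary: l rule: nat_induct_at_least)
    case (Suc k)
    then have "(k, l + 1) \<in> la" by simp
    then show ?case using irreducible_row_step[OF la irr, of k "l + 1"] Suc.prems by simp
  qed (use row1 in simp)
  have "la = delta s"
  proof safe
    fix a b assume "(a, b) \<in> la"
    then show "(a, b) \<in> delta s" using upper partition_pos[OF la] by simp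
  next
    fix a b assume "(a, b) \<in> delta s"
    then show "(a, b) \<in> la" using lower by simp
  qed
  then show ?thesis unfolding s_def .
qed

text \<open>The difference between the numbers of cells of the two chessboard colours is
  invariant under removing dominoes and distinguishes the staircases.\<close>

definition colour_excess :: "cells \<Rightarrow> int" where
  "colour_excess X = (\<Sum>x\<in>X. (-1) ^ (fst x + snd x))"

lemma colour_excess_domino_removal:
  assumes "(la, mu) \<in> domino_removal"
  shows "colour_excess la = colour_excess mu"
proof -
  from assms have la: "is_partition la" and sub: "mu \<subseteq> la" and D: "is_domino (la - mu)"
    unfolding domino_removal_def by auto
  have "colour_excess la = colour_excess mu + colour_excess (la - mu)"
    unfolding colour_excess_def using sum.subset_diff[OF sub partition_finite[OF la]] by (simp add: add.commute)
  moreover have "colour_excess (la - mu) = 0"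
    using D by (cases rule: is_dominoE) (auto simp: colour_excess_def vdomino_def hdomino_def)
  ultimately show ?thesis by simp
qed

lemma colour_excess_rtrancl_domino_removal:
  "(la, mu) \<in> domino_removal\<^sup>* \<Longrightarrow> colour_excess la = colour_excess mu"
  by (induction rule: rtrancl_induct) (auto dest: colour_excess_domino_removal)

lemma colour_excess_delta:
  "colour_excess (delta s) = (if even s then - int (s div 2) else int ((s + 1) div 2))"
proof (induction s)
  case 0
  have "delta 0 = {}" by auto
  then show ?case unfolding colour_excess_def by simp
next
  case (Suc s)
  let ?diag = "(\<lambda>k. (k, s + 2 - k)) ` {1..s + 1}"
  have split: "delta (Suc s) = delta s \<union> ?diag" "delta s \<inter> ?diag = {}"
    by (auto simp: image_iff)
  have inj: "inj_on (\<lambda>k. (k, s + 2 - k)) {1..s + 1}" by (auto simp: inj_on_def)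
  have "colour_excess ?diag = (\<Sum>k = 1..s + 1. (-1) ^ (k + (s + 2 - k)))"
    unfolding colour_excess_def by (subst sum.reindex[OF inj]) simp
  also have "\<dots> = (\<Sum>k = 1..s + 1. (-1) ^ (s + 2))" by (rule sum.cong) auto
  finally have diag: "colour_excess ?diag = int (s + 1) * (-1) ^ s" by simp
  have "colour_excess (delta (Suc s)) = colour_excess (delta s) + colour_excess ?diag"
    unfolding split(1) colour_excess_def
    by (rule sum.union_disjoint) (use split(2) partition_finite[OF partition_delta] in auto)
  then show ?case using Suc.IH diag by (auto elim: oddE)
qed

lemma colour_excess_delta_inj: "colour_excess (delta s) = colour_excess (delta r) \<Longrightarrow> s = r"
  unfolding colour_excess_delta by (auto split: if_splits elim!: oddE evenE)

lemma two_core_eqI: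
  assumes la: "is_partition la" and red: "(la, delta r) \<in> domino_removal\<^sup>*"
  shows "two_core la = delta r"
  unfolding two_core_def
proof (rule the_equality)
  show "(la, delta r) \<in> domino_removal\<^sup>* \<and> (\<nexists>nu. (delta r, nu) \<in> domino_removal)"
    using red delta_irreducible by blast
next
  fix mu assume mu: "(la, mu) \<in> domino_removal\<^sup>* \<and> (\<nexists>nu. (mu, nu) \<in> domino_removal)"
  then have "mu = delta (row_len mu 1)"
    using irreducible_eq_delta partition_rtrancl_domino_removal la by blast
  moreover have "colour_excess mu = colour_excess (delta r)"
    using colour_excess_rtrancl_domino_removal mu red by metis
  ultimately show "mu = delta r" using colour_excess_delta_inj by metis
qed

section \<open>The local rule and its inverse\<close>

definition domino_step :: "cells \<Rightarrow> cells \<Rightarrow> bool" where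
  "domino_step la mu \<longleftrightarrow> la \<subseteq> mu \<and> (mu = la \<or> is_domino (mu - la))"

definition vertical_step :: "cells \<Rightarrow> cells \<Rightarrow> nat" where
  "vertical_step la mu = (if vertical_domino (mu - la) then 1 else 0)"

definition rule_input :: "int \<Rightarrow> cells \<Rightarrow> cells \<Rightarrow> cells \<Rightarrow> bool" where
  "rule_input m la mu nu \<longleftrightarrow> is_partition la \<and> is_partition mu \<and> is_partition nu
     \<and> domino_step la mu \<and> domino_step la nu \<and> m \<in> {-1, 0, 1} \<and> (m \<noteq> 0 \<longrightarrow> mu = la \<and> nu = la)"

text \<open>The backward local rule: from \<open>\<mu> = \<lambda>(i+1,j)\<close>, \<open>\<nu> = \<lambda>(i,j+1)\<close> and \<open>\<rho> = \<lambda>(i+1,j+1)\<close> it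
  recovers the matrix entry and \<open>\<lambda>(i,j)\<close>, undoing each case of \<^const>\<open>local_rule\<close>.\<close>

definition inverse_rule :: "cells \<Rightarrow> cells \<Rightarrow> cells \<Rightarrow> int \<times> cells" where
  "inverse_rule mu nu rho =
    (if mu = nu then
       (if rho = mu then (0, mu)
        else if fst ` (rho - mu) = {1} then (1, mu)
        else if snd ` (rho - mu) = {1} then (-1, mu)
        else if vertical_domino (rho - mu) then
          (let l = the_elem (snd ` (rho - mu)) - 1 in (0, mu - vdomino (col_len mu l - 1) l))
        else (let k = the_elem (fst ` (rho - mu)) - 1 in (0, mu - hdomino k (row_len mu k - 1))))
     else if rho = mu then (0, nu)
     else if rho = nu then (0, mu)
     else if (rho - mu) \<inter> (rho - nu) = {} then (0, mu \<inter> nu)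
     else (0, (mu \<inter> nu) - (\<lambda>(k, l). (k - 1, l - 1)) ` ((rho - mu) \<inter> (rho - nu))))"

definition rule_output :: "int \<Rightarrow> cells \<Rightarrow> cells \<Rightarrow> cells \<Rightarrow> cells \<Rightarrow> bool" where
  "rule_output m la mu nu rho \<longleftrightarrow> is_partition rho \<and> domino_step mu rho \<and> domino_step nu rho
     \<and> card rho + card la = card mu + card nu + (if m = 0 then 0 else 2)
     \<and> vertical_step mu rho + vertical_step nu rho
         = vertical_step la mu + vertical_step la nu + (if m = -1 then 2 else 0)
     \<and> inverse_rule mu nu rho = (m, la)"

lemma domino_step_refl [simp]: "domino_step la la"
  unfolding domino_step_def by simp

lemma vertical_step_refl [simp]: "vertical_step la la = 0"
  unfolding vertical_step_def vertical_domino_def by auto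

lemma domino_step_Un_disjoint:
  assumes "la \<inter> D = {}" "is_domino D"
  shows "domino_step la (la \<union> D)" "la \<union> D - la = D" "la \<union> D \<noteq> la"
    and "finite la \<Longrightarrow> card (la \<union> D) = card la + 2"
proof -
  show diff: "la \<union> D - la = D" using assms(1) by blast
  then show "domino_step la (la \<union> D)" unfolding domino_step_def using assms(2) by auto
  show "la \<union> D \<noteq> la" using diff domino_card[OF assms(2)] by force
  show "finite la \<Longrightarrow> card (la \<union> D) = card la + 2"
    using card_Un_disjoint[of la D] assms domino_card[OF assms(2)] by simp
qed

lemma domino_stepE:
  assumes "domino_step la mu" "mu \<noteq> la"
  shows "la \<subseteq> mu" "is_domino (mu - la)" "mu = la \<union> (mu - la)" "la \<inter> (mu - la) = {}"
  using assms unfolding domino_step_def by auto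

lemma card_domino_step:
  assumes "domino_step la mu" "finite mu"
  shows "card mu = card la + (if mu = la then 0 else 2)"
proof (cases "mu = la")
  case False
  have "finite la" using domino_stepE(1)[OF assms(1) False] assms(2) by (rule finite_subset)
  then show ?thesis
    using domino_stepE[OF assms(1) False] domino_step_Un_disjoint(4)[of la "mu - la"] False by simp
qed simp

lemma local_rule_zero_distinct:
  assumes "la \<noteq> mu" "la \<noteq> nu"
  shows "local_rule 0 la mu nu =
    (let g = nu - la; g' = mu - la in
       if g \<inter> g' = {} then la \<union> g \<union> g'
       else if card (g \<inter> g') = 1 then la \<union> g \<union> g' \<union> (\<lambda>(k, l). (k + 1, l + 1)) ` (g \<inter> g')
       else if g = g' \<and> vertical_domino g then
         (let l = the_elem (snd ` g) in
          la \<union> g \<union> {(col_len (la \<union> g) (l + 1) + 1, l + 1), (col_len (la \<union> g) (l + 1) + 2, l + 1)})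
       else
         (let k = the_elem (fst ` g) in
          la \<union> g \<union> {(k + 1, row_len (la \<union> g) (k + 1) + 1), (k + 1, row_len (la \<union> g) (k + 1) + 2)}))"
  using assms unfolding local_rule_def by simp

lemma local_rule_symmetric:
  assumes "la \<noteq> mu" "la \<noteq> nu" "card ((nu - la) \<inter> (mu - la)) = 1"
  shows "local_rule 0 la mu nu = local_rule 0 la nu mu"
proof -
  have "card ((mu - la) \<inter> (nu - la)) = 1" "(nu - la) \<inter> (mu - la) \<noteq> {}" "(mu - la) \<inter> (nu - la) \<noteq> {}"
    using assms(3) by (auto simp: Int_commute)
  then show ?thesis unfolding local_rule_zero_distinct[OF assms(1,2)] local_rule_zero_distinct[OF assms(2,1)] Let_def
    using assms(3) by (simp add: Int_commute) blast
qed

lemma inverse_rule_symmetric: "mu \<noteq> nu \<Longrightarrow> inverse_rule mu nu rho = inverse_rule nu mu rho"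
  unfolding inverse_rule_def by (auto simp: Int_commute)

lemma rule_output_symmetric: "rule_output 0 la mu nu rho \<Longrightarrow> mu \<noteq> nu \<Longrightarrow> rule_output 0 la nu mu rho"
  unfolding rule_output_def using inverse_rule_symmetric by (metis add.commute)

lemma vdomino_Int_hdomino: "vdomino k l \<inter> hdomino k l = {(k, l)}" "hdomino k l \<inter> vdomino k l = {(k, l)}"
  unfolding vdomino_def hdomino_def by auto

lemma local_rule_overlap:
  assumes "la \<inter> hdomino k l = {}" "la \<inter> vdomino k l = {}"
  shows "local_rule 0 la (la \<union> hdomino k l) (la \<union> vdomino k l)
           = insert (k + 1, l + 1) (la \<union> hdomino k l \<union> vdomino k l)"
proof -
  have ne: "la \<noteq> la \<union> hdomino k l" "la \<noteq> la \<union> vdomino k l"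
    using assms unfolding hdomino_def vdomino_def by auto
  have diff: "la \<union> hdomino k l - la = hdomino k l" "la \<union> vdomino k l - la = vdomino k l"
    using assms by auto
  have "local_rule 0 la (la \<union> hdomino k l) (la \<union> vdomino k l)
      = la \<union> vdomino k l \<union> hdomino k l \<union> (\<lambda>(a, b). (a + 1, b + 1)) ` {(k, l)}"
    unfolding local_rule_zero_distinct[OF ne] Let_def diff vdomino_Int_hdomino by simp
  then show ?thesis by auto
qed

lemma local_rule_same_vdomino:
  assumes "la \<inter> vdomino k l = {}" "1 \<le> k" "1 \<le> l"
  defines "mu \<equiv> la \<union> vdomino k l"
  shows "local_rule 0 la mu mu = mu \<union> vdomino (col_len mu (l + 1) + 1) (l + 1)"
proof -
  have ne: "la \<noteq> mu" and diff: "mu - la = vdomino k l"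
    using assms unfolding vdomino_def by auto
  have "the_elem (snd ` vdomino k l) = l" "card (vdomino k l \<inter> vdomino k l) \<noteq> 1"
    "vdomino k l \<inter> vdomino k l \<noteq> {}"
    unfolding snd_vdomino by (simp_all add: vdomino_def)
  then have "local_rule 0 la mu mu
      = mu \<union> {(col_len mu (l + 1) + 1, l + 1), (col_len mu (l + 1) + 2, l + 1)}"
    unfolding local_rule_zero_distinct[OF ne ne] Let_def diff using assms(2,3) by (simp add: mu_def)
  then show ?thesis unfolding vdomino_def by simp
qed

lemma local_rule_same_hdomino:
  assumes "la \<inter> hdomino k l = {}"
  defines "mu \<equiv> la \<union> hdomino k l"
  shows "local_rule 0 la mu mu = mu \<union> hdomino (k + 1) (row_len mu (k + 1) + 1)"
proof -
  have ne: "la \<noteq> mu" and diff: "mu - la = hdomino k l"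
    using assms unfolding hdomino_def by auto
  have "the_elem (fst ` hdomino k l) = k" "card (hdomino k l \<inter> hdomino k l) \<noteq> 1"
    "hdomino k l \<inter> hdomino k l \<noteq> {}"
    unfolding fst_hdomino by (simp_all add: hdomino_def)
  then have "local_rule 0 la mu mu
      = mu \<union> {(k + 1, row_len mu (k + 1) + 1), (k + 1, row_len mu (k + 1) + 2)}"
    unfolding local_rule_zero_distinct[OF ne ne] Let_def diff by (simp add: mu_def)
  then show ?thesis unfolding hdomino_def by simp
qed

lemma rule_output_first_row:
  assumes la: "is_partition la"
  shows "rule_output 1 la la la (local_rule 1 la la la)"
proof -
  define D where "D = hdomino 1 (row_len la 1 + 1)"
  have rho: "local_rule 1 la la la = la \<union> D" unfolding local_rule_def D_def hdomino_def by simp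
  have disj: "la \<inter> D = {}" using mem_partition_iff_row_len[OF la, of 1] unfolding D_def hdomino_def by auto
  have D: "is_domino D" unfolding D_def by (rule is_domino_hdomino) auto
  note step = domino_step_Un_disjoint[OF disj D]
  have "is_partition (la \<union> D)" unfolding D_def by (rule partition_Un_hdomino_row_end[OF la]) auto
  moreover have "inverse_rule la la (la \<union> D) = (1, la)"
    using step(2,3) unfolding inverse_rule_def D_def by (simp add: fst_hdomino)
  moreover have "vertical_step la (la \<union> D) = 0"
    unfolding vertical_step_def step(2) by (simp add: D_def)
  ultimately show ?thesis
    unfolding rho rule_output_def using step partition_finite[OF la] by simp
qed

lemma rule_output_first_col:
  assumes la: "is_partition la"
  shows "rule_output (-1) la la la (local_rule (-1) la la la)"
proof -
  define D where "D = vdomino (col_len la 1 + 1) 1"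
  have rho: "local_rule (-1) la la la = la \<union> D" unfolding local_rule_def D_def vdomino_def by simp
  have disj: "la \<inter> D = {}" using mem_partition_iff_col_len[OF la, of _ 1] unfolding D_def vdomino_def by auto
  have D: "is_domino D" unfolding D_def by (rule is_domino_vdomino) auto
  note step = domino_step_Un_disjoint[OF disj D]
  have "is_partition (la \<union> D)" unfolding D_def by (rule partition_Un_vdomino_col_end[OF la]) auto
  moreover have "inverse_rule la la (la \<union> D) = (-1, la)"
    using step(2,3) unfolding inverse_rule_def D_def by (simp add: fst_vdomino snd_vdomino doubleton_eq_iff)
  moreover have "vertical_step la (la \<union> D) = 1"
    unfolding vertical_step_def step(2) by (simp add: D_def)
  ultimately show ?thesis
    unfolding rho rule_output_def using step partition_finite[OF la] by simp
qed

lemma rule_output_left_trivial: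
  assumes "is_partition nu" "domino_step la nu"
  shows "rule_output 0 la la nu (local_rule 0 la la nu)"
proof -
  have "local_rule 0 la la nu = nu" unfolding local_rule_def by simp
  moreover have "inverse_rule la nu nu = (0, la)" unfolding inverse_rule_def by simp
  ultimately show ?thesis unfolding rule_output_def using assms by simp
qed

lemma rule_output_right_trivial:
  assumes "is_partition mu" "domino_step la mu" "la \<noteq> mu"
  shows "rule_output 0 la mu la (local_rule 0 la mu la)"
proof -
  have "local_rule 0 la mu la = mu" unfolding local_rule_def using assms(3) by simp
  moreover have "inverse_rule mu la mu = (0, la)" unfolding inverse_rule_def using assms(3) by simp
  ultimately show ?thesis unfolding rule_output_def using assms by simp
qed

lemma rule_output_disjoint:
  assumes p: "is_partition la" "is_partition mu" "is_partition nu" and s: "domino_step la mu" "domino_step la nu"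
    and ne: "la \<noteq> mu" "la \<noteq> nu" and disj: "(nu - la) \<inter> (mu - la) = {}"
  shows "rule_output 0 la mu nu (local_rule 0 la mu nu)"
proof -
  note mu = domino_stepE[OF s(1) ne(1)[symmetric]] and nu = domino_stepE[OF s(2) ne(2)[symmetric]]
  have rho: "local_rule 0 la mu nu = mu \<union> nu"
    unfolding local_rule_zero_distinct[OF ne] Let_def using disj mu(1) nu(1) by auto
  have mu_disj: "mu \<inter> (nu - la) = {}" and nu_disj: "nu \<inter> (mu - la) = {}" using disj mu(1) nu(1) by auto
  have "mu \<union> nu = mu \<union> (nu - la)" "mu \<union> nu = nu \<union> (mu - la)" using mu(1) nu(1) by auto
  note step_mu = domino_step_Un_disjoint[OF mu_disj nu(2), folded this(1)]
    and step_nu = domino_step_Un_disjoint[OF nu_disj mu(2), folded this(2)]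
  have "mu \<noteq> nu" using step_mu(2) mu(1) nu(4) step_mu(3) by blast
  moreover have "mu \<inter> nu = la" using disj mu(1) nu(1) by blast
  ultimately have "inverse_rule mu nu (mu \<union> nu) = (0, la)"
    unfolding inverse_rule_def using step_mu(2,3) step_nu(2,3) disj by (simp add: Int_commute)
  moreover have "card mu = card la + 2" "card nu = card la + 2"
    using card_domino_step[OF s(1)] card_domino_step[OF s(2)] ne p partition_finite by auto
  ultimately show ?thesis
    unfolding rule_output_def rho vertical_step_def
    using partition_Un[OF p(2,3)] step_mu step_nu partition_finite p by simp
qed

lemma rule_output_overlap:
  assumes la: "is_partition la" and mu: "is_partition mu" "mu = la \<union> hdomino k l"
    and nu: "is_partition nu" "nu = la \<union> vdomino k l"
    and disj: "la \<inter> hdomino k l = {}" "la \<inter> vdomino k l = {}" and kl: "1 \<le> k" "1 \<le> l"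
  shows "rule_output 0 la mu nu (local_rule 0 la mu nu)"
proof -
  have out: "(k, l) \<notin> la" "(k + 1, l) \<notin> la" "(k, l + 1) \<notin> la"
    using disj unfolding hdomino_def vdomino_def by auto
  have "(k + 1, l + 1) \<notin> la" using partition_down_closed[OF la, of "k + 1" "l + 1" k l] out(1) kl by auto
  note out = out this
  define rho where "rho = insert (k + 1, l + 1) (mu \<union> nu)"
  have rho_eq: "local_rule 0 la mu nu = rho"
    unfolding rho_def mu(2) nu(2) local_rule_overlap[OF disj] by auto
  have rho_mu: "rho - mu = hdomino (k + 1) l" and rho_nu: "rho - nu = vdomino k (l + 1)"
    unfolding rho_def mu(2) nu(2) using out by (auto simp: hdomino_def vdomino_def)
  have "is_partition rho"
    unfolding rho_def by (rule partition_insert_corner[OF partition_Un[OF mu(1) nu(1)]])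
      (auto simp: mu(2) nu(2) hdomino_def vdomino_def)
  moreover have "domino_step mu rho" "domino_step nu rho"
    unfolding domino_step_def rho_mu rho_nu using kl
    by (auto simp: rho_def is_domino_hdomino is_domino_vdomino)
  moreover have "card rho + card la = card mu + card nu"
  proof -
    have "rho = la \<union> {(k, l), (k + 1, l), (k, l + 1), (k + 1, l + 1)}"
      unfolding rho_def mu(2) nu(2) hdomino_def vdomino_def by auto
    then have "card rho = card la + 4" using out partition_finite[OF la] by simp
    moreover have "card mu = card la + 2" "card nu = card la + 2"
      using domino_step_Un_disjoint(4) disj partition_finite[OF la] kl
      by (simp_all add: mu(2) nu(2) is_domino_hdomino is_domino_vdomino)
    ultimately show ?thesis by simp
  qed
  moreover have "inverse_rule mu nu rho = (0, la)"
  proof -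
    have "mu \<noteq> nu" "rho \<noteq> mu" "rho \<noteq> nu" "(rho - mu) \<inter> (rho - nu) = {(k + 1, l + 1)}"
      using out rho_mu rho_nu unfolding mu(2) nu(2) by (auto simp: hdomino_def vdomino_def)
    moreover have "mu \<inter> nu - {(k, l)} = la" using out unfolding mu(2) nu(2) hdomino_def vdomino_def by auto
    ultimately show ?thesis unfolding inverse_rule_def by simp
  qed
  moreover have "mu - la = hdomino k l" "nu - la = vdomino k l" using disj mu(2) nu(2) by auto
  ultimately show ?thesis
    unfolding rule_output_def rho_eq vertical_step_def rho_mu rho_nu using kl by simp
qed

lemma rule_output_same_vdomino:
  assumes la: "is_partition la" and mu: "is_partition mu" "mu = la \<union> vdomino k l"
    and disj: "la \<inter> vdomino k l = {}" and kl: "1 \<le> k" "1 \<le> l"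
  shows "rule_output 0 la mu mu (local_rule 0 la mu mu)"
proof -
  define c where "c = col_len mu (l + 1)"
  define D where "D = vdomino (c + 1) (l + 1)"
  have col: "\<And>a. (a, l + 1) \<in> mu \<longleftrightarrow> 1 \<le> a \<and> a \<le> c"
    using mem_partition_iff_col_len[OF mu(1)] c_def by blast
  have out: "(k, l) \<notin> la" "(k + 1, l) \<notin> la" using disj unfolding vdomino_def by auto
  have "(k, l + 1) \<notin> mu"
    using partition_down_closed[OF la, of k "l + 1" k l] out kl unfolding mu(2) vdomino_def by auto
  then have "c + 1 \<le> k" using col[of k] kl by auto
  have rho: "local_rule 0 la mu mu = mu \<union> D"
    unfolding D_def c_def mu(2) using local_rule_same_vdomino[OF disj kl] .
  have D_disj: "mu \<inter> D = {}" using col unfolding D_def vdomino_def by auto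
  have D: "is_domino D" unfolding D_def by (rule is_domino_vdomino) auto
  note step = domino_step_Un_disjoint[OF D_disj D]
  note step_la = domino_step_Un_disjoint[OF disj is_domino_vdomino[OF kl], folded mu(2)]
  have "is_partition (mu \<union> D)"
    unfolding D_def c_def
  proof (rule partition_Un_vdomino_col_end[OF mu(1)])
    have "(k + 1, l) \<in> mu" unfolding mu(2) vdomino_def by simp
    then show "(col_len mu (l + 1) + 2, l + 1 - 1) \<in> mu"
      using partition_down_closed[OF mu(1), of "k + 1" l "c + 2" l] \<open>c + 1 \<le> k\<close> kl c_def by simp
  qed simp
  moreover have "inverse_rule mu mu (mu \<union> D) = (0, la)"
  proof -
    have "(k + 2, l) \<notin> mu"
      using partition_down_closed[OF la, of "k + 2" l k l] out kl unfolding mu(2) vdomino_def by auto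
    moreover have "(k + 1, l) \<in> mu" unfolding mu(2) vdomino_def by simp
    ultimately have "col_len mu l = k + 1" using mem_partition_iff_col_len[OF mu(1)] by fastforce
    then have "mu - vdomino (col_len mu l - 1) l = la" using disj mu(2) by auto
    moreover have "fst ` D \<noteq> {1}" "snd ` D \<noteq> {1}" "vertical_domino D" "the_elem (snd ` D) = l + 1"
      unfolding D_def using kl by (auto simp: fst_vdomino snd_vdomino doubleton_eq_iff)
    ultimately show ?thesis unfolding inverse_rule_def step(2) using step(3) by simp
  qed
  moreover have "card (mu \<union> D) = card la + 4"
    using step(4) step_la(4) partition_finite[OF la] partition_finite[OF mu(1)] by simp
  moreover have "vertical_step mu (mu \<union> D) = 1" "vertical_step la mu = 1"
    unfolding vertical_step_def step(2) step_la(2) using kl by (simp_all add: D_def)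
  ultimately show ?thesis
    unfolding rule_output_def rho using step(1) step_la(4) partition_finite[OF la] by simp
qed

lemma rule_output_same_hdomino:
  assumes la: "is_partition la" and mu: "is_partition mu" "mu = la \<union> hdomino k l"
    and disj: "la \<inter> hdomino k l = {}" and kl: "1 \<le> k" "1 \<le> l"
  shows "rule_output 0 la mu mu (local_rule 0 la mu mu)"
proof -
  define c where "c = row_len mu (k + 1)"
  define D where "D = hdomino (k + 1) (c + 1)"
  have row: "\<And>b. (k + 1, b) \<in> mu \<longleftrightarrow> 1 \<le> b \<and> b \<le> c"
    using mem_partition_iff_row_len[OF mu(1)] c_def by blast
  have out: "(k, l) \<notin> la" "(k, l + 1) \<notin> la" using disj unfolding hdomino_def by auto
  have "(k + 1, l) \<notin> mu"
    using partition_down_closed[OF la, of "k + 1" l k l] out kl unfolding mu(2) hdomino_def by auto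
  then have "c + 1 \<le> l" using row[of l] kl by auto
  have rho: "local_rule 0 la mu mu = mu \<union> D"
    unfolding D_def c_def mu(2) using local_rule_same_hdomino[OF disj] .
  have D_disj: "mu \<inter> D = {}" using row unfolding D_def hdomino_def by auto
  have D: "is_domino D" unfolding D_def by (rule is_domino_hdomino) auto
  note step = domino_step_Un_disjoint[OF D_disj D]
  note step_la = domino_step_Un_disjoint[OF disj is_domino_hdomino[OF kl], folded mu(2)]
  have "is_partition (mu \<union> D)"
    unfolding D_def c_def
  proof (rule partition_Un_hdomino_row_end[OF mu(1)])
    have "(k, l + 1) \<in> mu" unfolding mu(2) hdomino_def by simp
    then show "(k + 1 - 1, row_len mu (k + 1) + 2) \<in> mu"
      using partition_down_closed[OF mu(1), of k "l + 1" k "c + 2"] \<open>c + 1 \<le> l\<close> kl c_def by simp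
  qed simp
  moreover have "inverse_rule mu mu (mu \<union> D) = (0, la)"
  proof -
    have "(k, l + 2) \<notin> mu"
      using partition_down_closed[OF la, of k "l + 2" k l] out kl unfolding mu(2) hdomino_def by auto
    moreover have "(k, l + 1) \<in> mu" unfolding mu(2) hdomino_def by simp
    ultimately have "row_len mu k = l + 1" using mem_partition_iff_row_len[OF mu(1)] by fastforce
    then have "mu - hdomino k (row_len mu k - 1) = la" using disj mu(2) by auto
    moreover have "fst ` D \<noteq> {1}" "snd ` D \<noteq> {1}" "\<not> vertical_domino D" "the_elem (fst ` D) = k + 1"
      unfolding D_def using kl by (auto simp: fst_hdomino snd_hdomino doubleton_eq_iff)
    ultimately show ?thesis unfolding inverse_rule_def step(2) using step(3) by simp
  qed
  moreover have "card (mu \<union> D) = card la + 4"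
    using step(4) step_la(4) partition_finite[OF la] partition_finite[OF mu(1)] by simp
  moreover have "vertical_step mu (mu \<union> D) = 0" "vertical_step la mu = 0"
    unfolding vertical_step_def step(2) step_la(2) by (simp_all add: D_def)
  ultimately show ?thesis
    unfolding rule_output_def rho using step(1) step_la(4) partition_finite[OF la] by simp
qed

lemma common_cell_of_added_dominoes:
  assumes la': "is_partition (la \<union> g')" and disj: "la \<inter> g = {}"
    and g: "g = vdomino a b \<or> g = hdomino a b" "1 \<le> a" "1 \<le> b"
    and g': "is_domino g'" and ne: "g \<noteq> g'" and x: "x \<in> g" "x \<in> g'"
  shows "x = (a, b)"
proof (rule ccontr)
  assume "x \<noteq> (a, b)"
  then have gx: "g = {(a, b), x}" and le: "a \<le> fst x" "b \<le> snd x"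
    using g(1) x(1) unfolding vdomino_def hdomino_def by auto
  show False
  proof (cases "(a, b) \<in> g'")
    case True
    then have "g \<subseteq> g'" using gx x(2) by blast
    then show False using domino_eq_if_subset g g' ne is_domino_vdomino is_domino_hdomino by metis
  next
    case False
    have "(a, b) \<in> la \<union> g'"
      using partition_down_closed[OF la', of "fst x" "snd x" a b] x(2) le g(2,3) by simp
    then show False using False disj gx by blast
  qed
qed

lemma overlapping_added_dominoes:
  assumes "is_partition (la \<union> g)" "is_partition (la \<union> g')" "la \<inter> g = {}" "la \<inter> g' = {}"
    and "is_domino g" "is_domino g'" "g \<noteq> g'" "g \<inter> g' \<noteq> {}"
  obtains k l where "1 \<le> k" "1 \<le> l" "g = vdomino k l" "g' = hdomino k l"
    | k l where "1 \<le> k" "1 \<le> l" "g = hdomino k l" "g' = vdomino k l"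
proof -
  obtain x where x: "x \<in> g" "x \<in> g'" using assms(8) by blast
  obtain a b where ab: "1 \<le> a" "1 \<le> b" "g = vdomino a b \<or> g = hdomino a b"
    using assms(5) unfolding is_domino_iff by blast
  obtain c d where cd: "1 \<le> c" "1 \<le> d" "g' = vdomino c d \<or> g' = hdomino c d"
    using assms(6) unfolding is_domino_iff by blast
  have "x = (a, b)" by (rule common_cell_of_added_dominoes[OF assms(2,3) ab(3,1,2) assms(6,7) x])
  moreover have "x = (c, d)"
    by (rule common_cell_of_added_dominoes[OF assms(1,4) cd(3,1,2) assms(5) assms(7)[symmetric] x(2,1)])
  ultimately show ?thesis using ab cd assms(7) that by auto
qed

lemma rule_output_both_grow:
  assumes p: "is_partition la" "is_partition mu" "is_partition nu"
    and s: "domino_step la mu" "domino_step la nu" and ne: "la \<noteq> mu" "la \<noteq> nu"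
  shows "rule_output 0 la mu nu (local_rule 0 la mu nu)"
proof -
  note mu = domino_stepE[OF s(1) ne(1)[symmetric]] and nu = domino_stepE[OF s(2) ne(2)[symmetric]]
  consider "(nu - la) \<inter> (mu - la) = {}" | "nu - la = mu - la" "(nu - la) \<inter> (mu - la) \<noteq> {}"
    | "nu - la \<noteq> mu - la" "(nu - la) \<inter> (mu - la) \<noteq> {}" by blast
  then show ?thesis
  proof cases
    case 1
    then show ?thesis using rule_output_disjoint[OF p s ne] by simp
  next
    case 2
    then have "nu = mu" using mu(3) nu(3) by metis
    from mu(2) show ?thesis
    proof (cases rule: is_dominoE)
      case (1 a b)
      then show ?thesis using rule_output_same_vdomino[OF p(1,2)] mu(3,4) \<open>nu = mu\<close> by metis
    next
      case (2 a b)
      then show ?thesis using rule_output_same_hdomino[OF p(1,2)] mu(3,4) \<open>nu = mu\<close> by metis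
    qed
  next
    case 3
    have "is_partition (la \<union> (nu - la))" "is_partition (la \<union> (mu - la))"
      using p(2,3) mu(3) nu(3) by simp_all
    from overlapping_added_dominoes[OF this nu(4) mu(4) nu(2) mu(2) 3]
    show ?thesis
    proof cases
      case (1 k l)
      then show ?thesis using rule_output_overlap[OF p(1,2) _ p(3)] mu(3,4) nu(3,4) by metis
    next
      case (2 k l)
      then have "rule_output 0 la nu mu (local_rule 0 la nu mu)"
        using rule_output_overlap[OF p(1,3) _ p(2)] mu(3,4) nu(3,4) by metis
      moreover have "card ((nu - la) \<inter> (mu - la)) = 1" using 2 vdomino_Int_hdomino by simp
      ultimately show ?thesis
        using rule_output_symmetric local_rule_symmetric[OF ne] 3 mu(3) nu(3) by metis
    qed
  qed
qed

theorem local_rule_output: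
  assumes "rule_input m la mu nu"
  shows "rule_output m la mu nu (local_rule m la mu nu)"
proof -
  have p: "is_partition la" "is_partition mu" "is_partition nu" and s: "domino_step la mu" "domino_step la nu"
    and m: "m \<in> {-1, 0, 1}" and trivial: "m \<noteq> 0 \<Longrightarrow> mu = la \<and> nu = la"
    using assms unfolding rule_input_def by auto
  consider "m = 1" | "m = -1" | "m = 0" "la = mu" | "m = 0" "la \<noteq> mu" "la = nu"
    | "m = 0" "la \<noteq> mu" "la \<noteq> nu" using m by auto
  then show ?thesis
  proof cases
    case 1 then show ?thesis using rule_output_first_row[OF p(1)] trivial by simp
  next
    case 2 then show ?thesis using rule_output_first_col[OF p(1)] trivial by simp
  next
    case 3 then show ?thesis using rule_output_left_trivial[OF p(3) s(2)] by simp
  next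
    case 4 then show ?thesis using rule_output_right_trivial[OF p(2) s(1)] by simp
  next
    case 5 then show ?thesis using rule_output_both_grow[OF p s] by simp
  qed
qed

lemma rule_inputI:
  "is_partition la \<Longrightarrow> is_partition mu \<Longrightarrow> is_partition nu \<Longrightarrow> domino_step la mu \<Longrightarrow> domino_step la nu
    \<Longrightarrow> m \<in> {-1, 0, 1} \<Longrightarrow> (m \<noteq> 0 \<Longrightarrow> mu = la \<and> nu = la) \<Longrightarrow> rule_input m la mu nu"
  unfolding rule_input_def by blast

lemma domino_stepI: "la \<subseteq> mu \<Longrightarrow> is_domino (mu - la) \<Longrightarrow> domino_step la mu"
  unfolding domino_step_def by blast

lemma added_hdomino_at_row_end:
  assumes mu: "is_partition mu" and rho: "is_partition (mu \<union> hdomino a b)"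
    and disj: "mu \<inter> hdomino a b = {}" and ab: "1 \<le> a" "1 \<le> b"
  shows "b = row_len mu a + 1"
proof -
  have "(a, b) \<notin> mu" using disj unfolding hdomino_def by auto
  then have "row_len mu a < b" using mem_partition_iff_row_len[OF mu, of a b] ab by auto
  moreover have "b - 1 \<le> row_len mu a"
  proof (cases "b = 1")
    case False
    then have "(a, b - 1) \<in> mu \<union> hdomino a b"
      using partition_down_closed[OF rho, of a b a "b - 1"] ab unfolding hdomino_def by auto
    then have "(a, b - 1) \<in> mu" unfolding hdomino_def using False ab by auto
    then show ?thesis using mem_partition_iff_row_len[OF mu] by blast
  qed simp
  ultimately show ?thesis by simp
qed

lemma added_vdomino_at_col_end:
  assumes mu: "is_partition mu" and rho: "is_partition (mu \<union> vdomino a b)"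
    and disj: "mu \<inter> vdomino a b = {}" and ab: "1 \<le> a" "1 \<le> b"
  shows "a = col_len mu b + 1"
proof -
  have "(a, b) \<notin> mu" using disj unfolding vdomino_def by auto
  then have "col_len mu b < a" using mem_partition_iff_col_len[OF mu, of a b] ab by auto
  moreover have "a - 1 \<le> col_len mu b"
  proof (cases "a = 1")
    case False
    then have "(a - 1, b) \<in> mu \<union> vdomino a b"
      using partition_down_closed[OF rho, of a b "a - 1" b] ab unfolding vdomino_def by auto
    then have "(a - 1, b) \<in> mu" unfolding vdomino_def using False ab by auto
    then show ?thesis using mem_partition_iff_col_len[OF mu] by blast
  qed simp
  ultimately show ?thesis by simp
qed

lemma inverse_exists_same_hdomino:
  assumes mu: "is_partition mu" and rho: "is_partition rho" "rho = mu \<union> hdomino a b"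
    and disj: "mu \<inter> hdomino a b = {}" and ab: "1 \<le> a" "1 \<le> b"
  shows "\<exists>m la. rule_input m la mu mu \<and> local_rule m la mu mu = rho"
proof -
  have b: "b = row_len mu a + 1" using added_hdomino_at_row_end[OF mu rho(1)[unfolded rho(2)] disj ab] .
  show ?thesis
  proof (cases "a = 1")
    case True
    then have "local_rule 1 mu mu mu = rho" unfolding local_rule_def rho(2) b hdomino_def by simp
    then show ?thesis using mu by (intro exI[of _ 1] exI[of _ mu]) (auto intro!: rule_inputI)
  next
    case False
    define k where "k = a - 1"
    define L where "L = row_len mu k"
    have k: "a = k + 1" "1 \<le> k" using False ab k_def by auto
    have "(a, b + 1) \<in> rho" unfolding rho(2) hdomino_def by simp
    then have "(k, b + 1) \<in> mu"
      using partition_down_closed[OF rho(1), of a "b + 1" k "b + 1"] k unfolding rho(2) hdomino_def by auto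
    then have "b + 1 \<le> L" using mem_partition_iff_row_len[OF mu] L_def by blast
    have below: "(k + 1, L - 1) \<notin> mu"
    proof
      assume "(k + 1, L - 1) \<in> mu"
      then have "(a, b) \<in> mu" by (rule partition_down_closed[OF mu]) (use k ab \<open>b + 1 \<le> L\<close> in auto)
      with disj show False unfolding hdomino_def by auto
    qed
    define D where "D = hdomino k (L - 1)"
    define la where "la = mu - D"
    have la: "is_partition la" "D \<subseteq> mu"
      using partition_Diff_hdomino_row_end[OF mu L_def[symmetric] _ below] \<open>b + 1 \<le> L\<close> ab
      unfolding la_def D_def by auto
    have D: "is_domino D" unfolding D_def using k(2) \<open>b + 1 \<le> L\<close> ab by (intro is_domino_hdomino) auto
    have mu_eq: "mu = la \<union> D" and la_disj: "la \<inter> D = {}" using la(2) unfolding la_def by auto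
    have "local_rule 0 la mu mu = mu \<union> hdomino (k + 1) (row_len mu (k + 1) + 1)"
      unfolding mu_eq D_def by (rule local_rule_same_hdomino) (use la_disj D_def in simp)
    also have "\<dots> = rho" unfolding rho(2) b k by simp
    finally have "local_rule 0 la mu mu = rho" .
    moreover have "domino_step la mu" unfolding mu_eq by (rule domino_step_Un_disjoint(1)[OF la_disj D])
    ultimately show ?thesis using la(1) mu
      by (intro exI[of _ 0] exI[of _ la]) (auto intro!: rule_inputI)
  qed
qed

lemma inverse_exists_same_vdomino:
  assumes mu: "is_partition mu" and rho: "is_partition rho" "rho = mu \<union> vdomino a b"
    and disj: "mu \<inter> vdomino a b = {}" and ab: "1 \<le> a" "1 \<le> b"
  shows "\<exists>m la. rule_input m la mu mu \<and> local_rule m la mu mu = rho"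
proof -
  have a: "a = col_len mu b + 1" using added_vdomino_at_col_end[OF mu rho(1)[unfolded rho(2)] disj ab] .
  show ?thesis
  proof (cases "b = 1")
    case True
    then have "local_rule (-1) mu mu mu = rho" unfolding local_rule_def rho(2) a vdomino_def by simp
    then show ?thesis using mu by (intro exI[of _ "-1"] exI[of _ mu]) (auto intro!: rule_inputI)
  next
    case False
    define l where "l = b - 1"
    define C where "C = col_len mu l"
    have l: "b = l + 1" "1 \<le> l" using False ab l_def by auto
    have "(a + 1, b) \<in> rho" unfolding rho(2) vdomino_def by simp
    then have "(a + 1, l) \<in> mu"
      using partition_down_closed[OF rho(1), of "a + 1" b "a + 1" l] l unfolding rho(2) vdomino_def by auto
    then have "a + 1 \<le> C" using mem_partition_iff_col_len[OF mu] C_def by blast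
    have right: "(C - 1, l + 1) \<notin> mu"
    proof
      assume "(C - 1, l + 1) \<in> mu"
      then have "(a, b) \<in> mu" by (rule partition_down_closed[OF mu]) (use l ab \<open>a + 1 \<le> C\<close> in auto)
      with disj show False unfolding vdomino_def by auto
    qed
    define D where "D = vdomino (C - 1) l"
    define la where "la = mu - D"
    have la: "is_partition la" "D \<subseteq> mu"
      using partition_Diff_vdomino_col_end[OF mu C_def[symmetric] _ right] \<open>a + 1 \<le> C\<close> ab
      unfolding la_def D_def by auto
    have D: "is_domino D" unfolding D_def using l(2) \<open>a + 1 \<le> C\<close> ab by (intro is_domino_vdomino) auto
    have mu_eq: "mu = la \<union> D" and la_disj: "la \<inter> D = {}" using la(2) unfolding la_def by auto
    have "local_rule 0 la mu mu = mu \<union> vdomino (col_len mu (l + 1) + 1) (l + 1)"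
      unfolding mu_eq D_def
      by (rule local_rule_same_vdomino) (use la_disj D_def l(2) \<open>a + 1 \<le> C\<close> ab in auto)
    also have "\<dots> = rho" unfolding rho(2) a l by simp
    finally have "local_rule 0 la mu mu = rho" .
    moreover have "domino_step la mu" unfolding mu_eq by (rule domino_step_Un_disjoint(1)[OF la_disj D])
    ultimately show ?thesis using la(1) mu
      by (intro exI[of _ 0] exI[of _ la]) (auto intro!: rule_inputI)
  qed
qed

lemma inverse_exists_same:
  assumes mu: "is_partition mu" and rho: "is_partition rho" and s: "domino_step mu rho"
  shows "\<exists>m la. rule_input m la mu mu \<and> local_rule m la mu mu = rho"
proof (cases "rho = mu")
  case True
  have "local_rule 0 mu mu mu = mu" unfolding local_rule_def by simp
  then show ?thesis using mu True by (intro exI[of _ 0] exI[of _ mu]) (auto intro!: rule_inputI)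
next
  case False
  note step = domino_stepE[OF s False]
  from step(2) show ?thesis
  proof (cases rule: is_dominoE)
    case (1 a b)
    then show ?thesis using inverse_exists_same_vdomino[OF mu rho] step(3,4) by metis
  next
    case (2 a b)
    then show ?thesis using inverse_exists_same_hdomino[OF mu rho] step(3,4) by metis
  qed
qed

lemma inverse_exists_overlap:
  assumes p: "is_partition mu" "is_partition nu" "is_partition rho" and sub: "mu \<subseteq> rho" "nu \<subseteq> rho"
    and rho_mu: "rho - mu = hdomino (k + 1) l" and rho_nu: "rho - nu = vdomino k (l + 1)"
    and kl: "1 \<le> k" "1 \<le> l"
  shows "\<exists>la. rule_input 0 la mu nu \<and> local_rule 0 la mu nu = rho \<and> local_rule 0 la nu mu = rho"
proof -
  have mu: "mu = rho - hdomino (k + 1) l" and nu: "nu = rho - vdomino k (l + 1)"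
    using sub rho_mu rho_nu by auto
  have in_rho: "(k + 1, l + 1) \<in> rho" "(k + 1, l) \<in> rho" "(k, l + 1) \<in> rho"
    using rho_mu rho_nu unfolding hdomino_def vdomino_def by auto
  have "(k, l) \<in> rho" using partition_down_closed[OF p(3) in_rho(1), of k l] kl by auto
  note in_rho = in_rho this
  define la where "la = mu \<inter> nu - {(k, l)}"
  have la: "is_partition la" unfolding la_def
    by (rule partition_remove_corner[OF partition_Int[OF p(1,2)]])
      (simp_all add: mu nu hdomino_def vdomino_def)
  have mu_eq: "mu = la \<union> hdomino k l" and nu_eq: "nu = la \<union> vdomino k l"
    and disj: "la \<inter> hdomino k l = {}" "la \<inter> vdomino k l = {}"
    using in_rho by (auto simp: la_def mu nu hdomino_def vdomino_def)
  have ne: "la \<noteq> mu" "la \<noteq> nu" using disj unfolding mu_eq nu_eq hdomino_def vdomino_def by auto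
  have "local_rule 0 la mu nu = rho"
    unfolding mu_eq nu_eq local_rule_overlap[OF disj] using in_rho
    by (auto simp: la_def mu nu hdomino_def vdomino_def)
  moreover have "card ((nu - la) \<inter> (mu - la)) = 1"
    using disj unfolding mu_eq nu_eq by (simp add: Un_Diff vdomino_Int_hdomino Diff_triv Int_commute)
  moreover have "rule_input 0 la mu nu"
    by (rule rule_inputI[OF la p(1,2)])
      (use disj kl in \<open>simp_all add: mu_eq nu_eq domino_step_Un_disjoint(1) is_domino_hdomino is_domino_vdomino\<close>)
  ultimately show ?thesis using local_rule_symmetric[OF ne] by metis
qed

lemma common_cell_of_removed_dominoes:
  assumes rho': "is_partition (rho - d')" and sub: "d \<subseteq> rho"
    and d: "d = {(a, b), y}" "a \<le> fst y" "b \<le> snd y" "1 \<le> a" "1 \<le> b"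
    and dominoes: "is_domino d" "is_domino d'" and ne: "d \<noteq> d'" and x: "x \<in> d" "x \<in> d'"
  shows "x = y"
proof (rule ccontr)
  assume "x \<noteq> y"
  then have "x = (a, b)" using d(1) x(1) by auto
  show False
  proof (cases "y \<in> d'")
    case True
    then have "d \<subseteq> d'" using d(1) \<open>x = (a, b)\<close> x(2) by blast
    then show False using domino_eq_if_subset[OF dominoes] ne by blast
  next
    case False
    then have "y \<in> rho - d'" using sub d(1) by blast
    then have "x \<in> rho - d'"
      using partition_down_closed[OF rho', of "fst y" "snd y" a b] d \<open>x = (a, b)\<close> by simp
    then show False using x(2) by blast
  qed
qed

lemma overlapping_removed_dominoes:
  assumes "is_partition (rho - d)" "is_partition (rho - d')" "d \<subseteq> rho" "d' \<subseteq> rho"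
    and "is_domino d" "is_domino d'" "d \<noteq> d'" "d \<inter> d' \<noteq> {}"
  obtains k l where "1 \<le> k" "1 \<le> l" "d = vdomino k (l + 1)" "d' = hdomino (k + 1) l"
    | k l where "1 \<le> k" "1 \<le> l" "d = hdomino (k + 1) l" "d' = vdomino k (l + 1)"
proof -
  obtain x where x: "x \<in> d" "x \<in> d'" using assms(8) by blast
  obtain a b where ab: "1 \<le> a" "1 \<le> b" "d = vdomino a b \<or> d = hdomino a b"
    using assms(5) unfolding is_domino_iff by blast
  obtain c e where ce: "1 \<le> c" "1 \<le> e" "d' = vdomino c e \<or> d' = hdomino c e"
    using assms(6) unfolding is_domino_iff by blast
  define y where "y = (if d = vdomino a b then (a + 1, b) else (a, b + 1))"
  define y' where "y' = (if d' = vdomino c e then (c + 1, e) else (c, e + 1))"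
  have "d = {(a, b), y}" "a \<le> fst y" "b \<le> snd y"
    using ab(3) unfolding y_def vdomino_def hdomino_def by auto
  from common_cell_of_removed_dominoes[OF assms(2,3) this ab(1,2) assms(5,6,7) x]
  have "x = y" .
  moreover have "d' = {(c, e), y'}" "c \<le> fst y'" "e \<le> snd y'"
    using ce(3) unfolding y'_def vdomino_def hdomino_def by auto
  from common_cell_of_removed_dominoes[OF assms(1,4) this ce(1,2) assms(6,5) assms(7)[symmetric] x(2,1)]
  have "x = y'" .
  ultimately have "y = y'" by simp
  show ?thesis
  proof (cases "d = vdomino a b")
    case True
    then have "d' = hdomino c e" "a + 1 = c" "b = e + 1"
      using \<open>y = y'\<close> assms(7) ce(3) unfolding y_def y'_def by auto
    then show ?thesis using True ab ce that(1)[of a e] by auto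
  next
    case False
    then have "d = hdomino a b" "d' = vdomino c e" "a = c + 1" "b + 1 = e"
      using \<open>y = y'\<close> assms(7) ab(3) ce(3) unfolding y_def y'_def by auto
    then show ?thesis using ab ce that(2)[of c b] by auto
  qed
qed

lemma inverse_exists_disjoint:
  assumes p: "is_partition mu" "is_partition nu" and sub: "mu \<subseteq> rho" "nu \<subseteq> rho"
    and D: "is_domino (rho - mu)" "is_domino (rho - nu)" and disj: "(rho - mu) \<inter> (rho - nu) = {}"
  shows "\<exists>la. rule_input 0 la mu nu \<and> local_rule 0 la mu nu = rho"
proof -
  define la where "la = mu \<inter> nu"
  have diffs: "mu - la = rho - nu" "nu - la = rho - mu" using disj sub unfolding la_def by auto
  have "rho - nu \<noteq> {}" "rho - mu \<noteq> {}" using domino_card D by (metis card.empty zero_neq_numeral)+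
  then have ne: "la \<noteq> mu" "la \<noteq> nu" using diffs by auto
  have "local_rule 0 la mu nu = la \<union> (rho - mu) \<union> (rho - nu)"
    unfolding local_rule_zero_distinct[OF ne] Let_def diffs using disj by simp
  also have "\<dots> = rho" unfolding la_def using sub by auto
  finally have "local_rule 0 la mu nu = rho" .
  moreover have "rule_input 0 la mu nu"
    by (rule rule_inputI[OF partition_Int[OF p(1,2), folded la_def] p(1,2)])
      (use diffs D la_def in \<open>auto intro!: domino_stepI\<close>)
  ultimately show ?thesis by blast
qed

lemma inverse_exists_distinct:
  assumes p: "is_partition mu" "is_partition nu" "is_partition rho"
    and s: "domino_step mu rho" "domino_step nu rho" and ne: "mu \<noteq> nu"
  shows "\<exists>m la. rule_input m la mu nu \<and> local_rule m la mu nu = rho"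
proof -
  consider "rho = mu" | "rho = nu" | "rho \<noteq> mu" "rho \<noteq> nu" by blast
  then show ?thesis
  proof cases
    case 1
    then have "local_rule 0 nu mu nu = rho" "rule_input 0 nu mu nu"
      using p s ne unfolding local_rule_def by (auto intro!: rule_inputI)
    then show ?thesis by blast
  next
    case 2
    then have "local_rule 0 mu mu nu = rho" "rule_input 0 mu mu nu"
      using p s unfolding local_rule_def by (auto intro!: rule_inputI)
    then show ?thesis by blast
  next
    case 3
    note mu = domino_stepE[OF s(1) 3(1)] and nu = domino_stepE[OF s(2) 3(2)]
    have mu_eq: "mu = rho - (rho - mu)" and nu_eq: "nu = rho - (rho - nu)" using mu(1) nu(1) by auto
    show ?thesis
    proof (cases "(rho - mu) \<inter> (rho - nu) = {}")
      case True
      then show ?thesis using inverse_exists_disjoint[OF p(1,2) mu(1) nu(1) mu(2) nu(2)] by blast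
    next
      case False
      have diff_ne: "rho - mu \<noteq> rho - nu" using mu_eq nu_eq ne by metis
      have "is_partition (rho - (rho - mu))" "is_partition (rho - (rho - nu))"
        using p(1,2) mu_eq nu_eq by simp_all
      from overlapping_removed_dominoes[OF this Diff_subset Diff_subset mu(2) nu(2) diff_ne False]
      show ?thesis
      proof cases
        case (1 k l)
        then obtain la where "rule_input 0 la nu mu" "local_rule 0 la mu nu = rho"
          using inverse_exists_overlap[OF p(2,1,3) nu(1) mu(1)] by metis
        then show ?thesis unfolding rule_input_def by auto
      next
        case (2 k l)
        then show ?thesis using inverse_exists_overlap[OF p mu(1) nu(1)] by metis
      qed
    qed
  qed
qed

theorem inverse_rule_correct:
  assumes p: "is_partition mu" "is_partition nu" "is_partition rho"
    and s: "domino_step mu rho" "domino_step nu rho"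
  defines "out \<equiv> inverse_rule mu nu rho"
  shows "rule_input (fst out) (snd out) mu nu \<and> local_rule (fst out) (snd out) mu nu = rho"
proof -
  obtain m la where input: "rule_input m la mu nu" and rho: "local_rule m la mu nu = rho"
    using inverse_exists_same[OF p(1,3) s(1)] inverse_exists_distinct[OF p s] by (cases "mu = nu") auto
  have "out = (m, la)" using local_rule_output[OF input] rho unfolding rule_output_def out_def by simp
  then show ?thesis using input rho by simp
qed

section \<open>The growth diagram of a signed permutation\<close>

lemma Bn_length: "w \<in> Bn n \<Longrightarrow> length w = n"
  unfolding Bn_def by simp

lemma Bn_letter_val: "w \<in> Bn n \<Longrightarrow> i < n \<Longrightarrow> 1 \<le> letter_val (w ! i) \<and> letter_val (w ! i) \<le> n"
  unfolding Bn_def by (auto simp: subset_iff set_conv_nth)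

lemma Bn_card_letter_val_eq:
  "w \<in> Bn n \<Longrightarrow> 1 \<le> k \<Longrightarrow> k \<le> n \<Longrightarrow> card {a. a < n \<and> letter_val (w ! a) = k} = 1"
  unfolding Bn_def by (auto simp: length_filter_conv_card)

lemma Bn_letter_val_inj:
  assumes w: "w \<in> Bn n" and ij: "i < n" "j < n" and eq: "letter_val (w ! i) = letter_val (w ! j)"
  shows "i = j"
proof (rule ccontr)
  assume "i \<noteq> j"
  let ?S = "{a. a < n \<and> letter_val (w ! a) = letter_val (w ! i)}"
  have "{i, j} \<subseteq> ?S" using ij eq by auto
  then have "card {i, j} \<le> card ?S" by (intro card_mono) auto
  then show False using Bn_card_letter_val_eq[OF w] Bn_letter_val[OF w ij(1)] \<open>i \<noteq> j\<close> by simp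
qed

lemma card_less_Suc_conj:
  "card {a. a < Suc i \<and> P a} = card {a. a < i \<and> P a} + (if P i then 1 else 0)"
proof -
  have "{a. a < Suc i \<and> P a} = {a. a < i \<and> P a} \<union> (if P i then {i} else {})" by (auto simp: less_Suc_eq)
  then show ?thesis by (auto simp: card_insert_if)
qed

lemma card_less_conj_eq_sum: "card {j. j < (n::nat) \<and> P j} = (\<Sum>j<n. if P j then 1 else 0)"
  by (induction n) (simp_all add: card_less_Suc_conj)

text \<open>\<open>rect_count w i j\<close> is the number of nonzero entries \<open>M(a,b)\<close> with \<open>a \<le> i\<close> and \<open>b \<le> j\<close>.\<close>

definition rect_count :: "letter list \<Rightarrow> nat \<Rightarrow> nat \<Rightarrow> nat" where
  "rect_count w i j = card {a. a < i \<and> letter_val (w ! a) \<le> j}"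

lemma rect_count_0 [simp]: "rect_count w 0 j = 0"
  unfolding rect_count_def by simp

lemma rect_count_Suc_row: "rect_count w (Suc i) j = rect_count w i j + (if letter_val (w ! i) \<le> j then 1 else 0)"
  unfolding rect_count_def by (rule card_less_Suc_conj)

lemma rect_count_Suc_col:
  "rect_count w i (Suc j) = rect_count w i j + card {a. a < i \<and> letter_val (w ! a) = Suc j}"
proof -
  have "{a. a < i \<and> letter_val (w ! a) \<le> Suc j}
      = {a. a < i \<and> letter_val (w ! a) \<le> j} \<union> {a. a < i \<and> letter_val (w ! a) = Suc j}"
    by auto
  moreover have "card ({a. a < i \<and> letter_val (w ! a) \<le> j} \<union> {a. a < i \<and> letter_val (w ! a) = Suc j})
      = card {a. a < i \<and> letter_val (w ! a) \<le> j} + card {a. a < i \<and> letter_val (w ! a) = Suc j}"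
    by (rule card_Un_disjoint) auto
  ultimately show ?thesis unfolding rect_count_def by simp
qed

lemma rect_count_last_row:
  assumes w: "w \<in> Bn n"
  shows "j \<le> n \<Longrightarrow> rect_count w n j = j"
proof (induction j)
  case 0
  have "{a. a < n \<and> letter_val (w ! a) \<le> 0} = {}" using Bn_letter_val[OF w] by fastforce
  then show ?case unfolding rect_count_def by simp
next
  case (Suc j)
  then show ?case using Bn_card_letter_val_eq[OF w, of "Suc j"] by (simp add: rect_count_Suc_col)
qed

lemma rect_count_last_col: "w \<in> Bn n \<Longrightarrow> i \<le> n \<Longrightarrow> rect_count w i n = i"
proof -
  assume "w \<in> Bn n" "i \<le> n"
  then have "{a. a < i \<and> letter_val (w ! a) \<le> n} = {..<i}" using Bn_letter_val by fastforce
  then show ?thesis unfolding rect_count_def by simp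
qed

lemma Mentry_Suc: "Mentry w (Suc i) (Suc j) = (if w ! i = Unb (Suc j) then 1 else if w ! i = Bar (Suc j) then -1 else 0)"
  unfolding Mentry_def by simp

lemma Mentry_nonzero_iff: "Mentry w (Suc i) (Suc j) \<noteq> 0 \<longleftrightarrow> letter_val (w ! i) = Suc j"
  unfolding Mentry_Suc by (cases "w ! i") auto

lemma Mentry_range: "Mentry w (Suc i) (Suc j) \<in> {-1, 0, 1}"
  unfolding Mentry_Suc by auto

lemma grow_Suc_Suc: "grow w r (Suc i) (Suc j) =
    local_rule (Mentry w (Suc i) (Suc j)) (grow w r i j) (grow w r (Suc i) j) (grow w r i (Suc j))"
  by simp

lemma grow_0_right [simp]: "grow w r i 0 = delta r"
  by (cases i) auto

definition grid_inv :: "letter list \<Rightarrow> nat \<Rightarrow> nat \<Rightarrow> nat \<Rightarrow> bool" where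
  "grid_inv w r i j \<longleftrightarrow> is_partition (grow w r i j)
     \<and> card (grow w r i j) = card (delta r) + 2 * rect_count w i j
     \<and> (0 < i \<longrightarrow> domino_step (grow w r (i - 1) j) (grow w r i j))
     \<and> (0 < j \<longrightarrow> domino_step (grow w r i (j - 1)) (grow w r i j))"

lemma grid_inv_rule_input:
  assumes w: "w \<in> Bn n" and ij: "i < n" "j < n"
    and inv: "grid_inv w r i j" "grid_inv w r (Suc i) j" "grid_inv w r i (Suc j)"
  shows "rule_input (Mentry w (Suc i) (Suc j)) (grow w r i j) (grow w r (Suc i) j) (grow w r i (Suc j))"
proof -
  let ?la = "grow w r i j" and ?mu = "grow w r (Suc i) j" and ?nu = "grow w r i (Suc j)"
  have p: "is_partition ?la" "is_partition ?mu" "is_partition ?nu"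
    using inv unfolding grid_inv_def by blast+
  have s: "domino_step ?la ?mu" "domino_step ?la ?nu"
    using inv(2,3) unfolding grid_inv_def by simp_all
  have "?mu = ?la \<and> ?nu = ?la" if "Mentry w (Suc i) (Suc j) \<noteq> 0"
  proof -
    have val: "letter_val (w ! i) = Suc j" using that Mentry_nonzero_iff by blast
    have "a = i" if "a < i" "letter_val (w ! a) = Suc j" for a
      using Bn_letter_val_inj[OF w, of a i] that ij val by simp
    then have "{a. a < i \<and> letter_val (w ! a) = Suc j} = {}" by blast
    then have "rect_count w (Suc i) j = rect_count w i j" "rect_count w i (Suc j) = rect_count w i j"
      using val by (simp_all add: rect_count_Suc_row rect_count_Suc_col)
    then have "card ?mu = card ?la" "card ?nu = card ?la" using inv unfolding grid_inv_def by simp_all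
    then show ?thesis
      using card_domino_step[OF s(1) partition_finite[OF p(2)]] card_domino_step[OF s(2) partition_finite[OF p(3)]]
      by (simp split: if_splits)
  qed
  then show ?thesis using p s Mentry_range by (intro rule_inputI) auto
qed

lemma grid_inv_step:
  assumes w: "w \<in> Bn n" and ij: "i < n" "j < n"
    and inv: "grid_inv w r i j" "grid_inv w r (Suc i) j" "grid_inv w r i (Suc j)"
  shows "grid_inv w r (Suc i) (Suc j)"
proof -
  have out: "rule_output (Mentry w (Suc i) (Suc j)) (grow w r i j) (grow w r (Suc i) j) (grow w r i (Suc j))
      (grow w r (Suc i) (Suc j))"
    unfolding grow_Suc_Suc by (rule local_rule_output[OF grid_inv_rule_input[OF w ij inv]])
  have "rect_count w (Suc i) (Suc j) + rect_count w i j
      = rect_count w (Suc i) j + rect_count w i (Suc j) + (if Mentry w (Suc i) (Suc j) = 0 then 0 else 1)"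
    using rect_count_Suc_row[of w i "Suc j"] rect_count_Suc_row[of w i j] Mentry_nonzero_iff[of w i j] by auto
  then have "card (grow w r (Suc i) (Suc j)) = card (delta r) + 2 * rect_count w (Suc i) (Suc j)"
    using out inv unfolding rule_output_def grid_inv_def by (auto split: if_splits)
  then show ?thesis using out unfolding grid_inv_def rule_output_def by simp
qed

lemma grid_inv_all:
  assumes w: "w \<in> Bn n"
  shows "i \<le> n \<Longrightarrow> j \<le> n \<Longrightarrow> grid_inv w r i j"
proof (induction i arbitrary: j)
  case 0
  show ?case unfolding grid_inv_def using partition_delta by simp
next
  case (Suc i)
  note outer = Suc.IH and i = Suc.prems(1)
  show ?case using Suc.prems(2)
  proof (induction j)
    case 0
    have "1 \<le> letter_val (w ! a)" if "a < Suc i" for a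
      using Bn_letter_val[OF w, of a] that i by simp
    then have "{a. a < Suc i \<and> letter_val (w ! a) \<le> 0} = {}" by force
    then show ?case unfolding grid_inv_def rect_count_def using partition_delta by simp
  next
    case (Suc j)
    then show ?case using grid_inv_step[OF w _ _ outer[of j] Suc.IH outer[of "Suc j"]] i by simp
  qed
qed

lemma grid_rule_input:
  assumes w: "w \<in> Bn n" and ij: "i < n" "j < n"
  shows "rule_input (Mentry w (Suc i) (Suc j)) (grow w r i j) (grow w r (Suc i) j) (grow w r i (Suc j))"
  using grid_inv_rule_input[OF w ij] grid_inv_all[OF w] ij by simp

lemma grid_rule_output:
  assumes w: "w \<in> Bn n" and ij: "i < n" "j < n"
  shows "rule_output (Mentry w (Suc i) (Suc j)) (grow w r i j) (grow w r (Suc i) j) (grow w r i (Suc j))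
      (grow w r (Suc i) (Suc j))"
  unfolding grow_Suc_Suc by (rule local_rule_output[OF grid_rule_input[OF w ij]])

lemma is_SDT_map_upt:
  assumes "f 0 = delta r" "\<And>i. i \<le> n \<Longrightarrow> is_partition (f i)"
    and "\<And>i. i < n \<Longrightarrow> domino_step (f i) (f (Suc i))" "\<And>i. i < n \<Longrightarrow> f (Suc i) \<noteq> f i"
  shows "is_SDT r (f n) (map f [0..<Suc n])"
proof -
  have nth: "map f [0..<Suc n] ! i = f i" if "i \<le> n" for i
    using that by (simp del: upt_Suc add: nth_map_upt)
  show ?thesis unfolding is_SDT_def
  proof (intro conjI allI impI)
    show "hd (map f [0..<Suc n]) = delta r" using assms(1) by (simp add: hd_map del: upt_Suc)
    show "last (map f [0..<Suc n]) = f n" by (simp add: last_map del: upt_Suc)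
    fix i
    show "i < length (map f [0..<Suc n]) \<Longrightarrow> is_partition (map f [0..<Suc n] ! i)"
      using nth assms(2) by simp
    assume "i + 1 < length (map f [0..<Suc n])"
    then have "i < n" by simp
    then show "map f [0..<Suc n] ! i \<subseteq> map f [0..<Suc n] ! (i + 1)"
      "is_domino (map f [0..<Suc n] ! (i + 1) - map f [0..<Suc n] ! i)"
      using nth assms(3,4)[of i] unfolding domino_step_def by auto
  qed simp
qed

lemma Pd_eq_map: "length w = n \<Longrightarrow> Pd r w = map (grow w r n) [0..<Suc n]"
  unfolding Pd_def by simp

lemma Qd_eq_map: "length w = n \<Longrightarrow> Qd r w = map (\<lambda>i. grow w r i n) [0..<Suc n]"
  unfolding Qd_def by simp

lemma Pd_is_SDT:
  assumes w: "w \<in> Bn n"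
  shows "is_SDT r (grow w r n n) (Pd r w)"
  unfolding Pd_eq_map[OF Bn_length[OF w]]
proof (rule is_SDT_map_upt)
  fix j assume "j < n"
  then have "grid_inv w r n j" "grid_inv w r n (Suc j)" using grid_inv_all[OF w] by simp_all
  then show "domino_step (grow w r n j) (grow w r n (Suc j))" "grow w r n (Suc j) \<noteq> grow w r n j"
    unfolding grid_inv_def using rect_count_last_row[OF w] \<open>j < n\<close> by (auto dest: arg_cong[of _ _ card])
qed (use grid_inv_all[OF w] grid_inv_def in auto)

lemma Qd_is_SDT:
  assumes w: "w \<in> Bn n"
  shows "is_SDT r (grow w r n n) (Qd r w)"
  unfolding Qd_eq_map[OF Bn_length[OF w]]
proof (rule is_SDT_map_upt[where f = "\<lambda>i. grow w r i n"])
  fix i assume "i < n"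
  then have "grid_inv w r i n" "grid_inv w r (Suc i) n" using grid_inv_all[OF w] by simp_all
  then show "domino_step (grow w r i n) (grow w r (Suc i) n)" "grow w r (Suc i) n \<noteq> grow w r i n"
    unfolding grid_inv_def using rect_count_last_col[OF w] \<open>i < n\<close> by (auto dest: arg_cong[of _ _ card])
qed (use grid_inv_all[OF w] grid_inv_def in auto)

lemma is_SDT_nth_0: "is_SDT r la D \<Longrightarrow> D ! 0 = delta r"
  unfolding is_SDT_def by (simp add: hd_conv_nth[symmetric])

lemma is_SDT_step:
  assumes "is_SDT r la D" "Suc i < length D"
  shows "domino_step (D ! i) (D ! Suc i) \<and> D ! Suc i \<noteq> D ! i"
proof -
  have "D ! i \<subseteq> D ! Suc i" and D: "is_domino (D ! Suc i - D ! i)"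
    using assms unfolding is_SDT_def by auto
  moreover have "D ! Suc i \<noteq> D ! i" using domino_card[OF D] by force
  ultimately show ?thesis unfolding domino_step_def by blast
qed

lemma is_SDT_card_nth:
  assumes D: "is_SDT r la D"
  shows "i < length D \<Longrightarrow> card (D ! i) = card (delta r) + 2 * i"
proof (induction i)
  case (Suc i)
  have "finite (D ! Suc i)" using D Suc.prems partition_finite unfolding is_SDT_def by blast
  then show ?case using Suc is_SDT_step[OF D Suc.prems] card_domino_step[of "D ! i" "D ! Suc i"] by simp
qed (simp add: is_SDT_nth_0[OF D])

lemma is_SDT_nth:
  assumes D: "is_SDT r la D" and card_la: "card la = card (delta r) + 2 * n"
  shows "length D = Suc n" "D ! 0 = delta r" "D ! n = la" "\<And>i. i \<le> n \<Longrightarrow> is_partition (D ! i)"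
    "\<And>i. i < n \<Longrightarrow> domino_step (D ! i) (D ! Suc i)" "\<And>i. i < n \<Longrightarrow> card (D ! Suc i) = card (D ! i) + 2"
proof -
  have "D \<noteq> []" and hd: "hd D = delta r" and last: "last D = la" using D unfolding is_SDT_def by auto
  then show len: "length D = Suc n"
    using is_SDT_card_nth[OF D, of "length D - 1"] card_la by (simp add: last_conv_nth)
  show "D ! 0 = delta r" by (rule is_SDT_nth_0[OF D])
  show "D ! n = la" using last len \<open>D \<noteq> []\<close> by (simp add: last_conv_nth)
  show "\<And>i. i \<le> n \<Longrightarrow> is_partition (D ! i)" using D len unfolding is_SDT_def by auto
  show "\<And>i. i < n \<Longrightarrow> domino_step (D ! i) (D ! Suc i)" using D len unfolding is_SDT_def domino_step_def by auto
  show "\<And>i. i < n \<Longrightarrow> card (D ! Suc i) = card (D ! i) + 2" using is_SDT_card_nth[OF D] len by simp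
qed

lemma is_SDT_reduces_to_delta:
  assumes D: "is_SDT r la D"
  shows "(la, delta r) \<in> domino_removal\<^sup>*"
proof -
  have "(D ! i, delta r) \<in> domino_removal\<^sup>*" if "i < length D" for i
    using that
  proof (induction i)
    case 0
    then show ?case using is_SDT_nth_0[OF D] by simp
  next
    case (Suc i)
    have "(D ! Suc i, D ! i) \<in> domino_removal" using D Suc.prems unfolding is_SDT_def domino_removal_def by auto
    with Suc show ?case by (meson converse_rtrancl_into_rtrancl Suc_lessD)
  qed
  moreover have "D \<noteq> []" "last D = la" using D unfolding is_SDT_def by auto
  ultimately show ?thesis by (metis last_conv_nth diff_less length_greater_0_conv zero_less_one)
qed

lemma is_SDT_shape_in_Pr:
  assumes D: "is_SDT r la D" and card_la: "card la = card (delta r) + 2 * n"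
  shows "la \<in> Pr r n"
proof -
  have "is_partition la" using is_SDT_nth(3)[OF D card_la] is_SDT_nth(4)[OF D card_la, of n] by simp
  then show ?thesis unfolding Pr_def using two_core_eqI is_SDT_reduces_to_delta[OF D] card_la by simp
qed

lemma grow_shape_in_Pr:
  assumes w: "w \<in> Bn n"
  shows "grow w r n n \<in> Pr r n"
proof -
  have "grid_inv w r n n" by (rule grid_inv_all[OF w]) simp_all
  then have "card (grow w r n n) = card (delta r) + 2 * n"
    unfolding grid_inv_def using rect_count_last_row[OF w, of n] by simp
  then show ?thesis by (rule is_SDT_shape_in_Pr[OF Pd_is_SDT[OF w]])
qed

section \<open>Spin and barred letters\<close>

lemma sp_map_upt: "sp (map f [0..<Suc n]) = of_nat (\<Sum>j<n. vertical_step (f j) (f (Suc j))) / 2"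
proof -
  have "{i. i + 1 < length (map f [0..<Suc n]) \<and> vertical_domino (map f [0..<Suc n] ! (i + 1) - map f [0..<Suc n] ! i)}
      = {j. j < n \<and> vertical_domino (f (Suc j) - f j)}"
    by (auto simp del: upt_Suc simp add: nth_map_upt)
  then show ?thesis unfolding sp_def vertical_step_def by (simp add: card_less_conj_eq_sum)
qed

lemma grid_sum_telescope:
  fixes K H E :: "nat \<Rightarrow> nat \<Rightarrow> nat"
  assumes K0: "\<And>j. K 0 j = 0" and H0: "\<And>i. H i 0 = 0"
    and square: "\<And>i j. i < n \<Longrightarrow> j < n \<Longrightarrow> K (Suc i) j + H i (Suc j) = K i j + H i j + E i j"
  shows "(\<Sum>j<n. K n j) + (\<Sum>i<n. H i n) = (\<Sum>i<n. \<Sum>j<n. E i j)"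
proof -
  have shift_K: "(\<Sum>i<n. K (Suc i) j) = (\<Sum>i<n. K i j) + K n j" for j
    using sum.lessThan_Suc_shift[of "\<lambda>i. K i j" n] K0 by simp
  have shift_H: "(\<Sum>j<n. H i (Suc j)) = (\<Sum>j<n. H i j) + H i n" for i
    using sum.lessThan_Suc_shift[of "H i" n] H0 by simp
  have "(\<Sum>i<n. \<Sum>j<n. K (Suc i) j + H i (Suc j)) = (\<Sum>i<n. \<Sum>j<n. K i j + H i j + E i j)"
    using square by (intro sum.cong) simp_all
  then have "(\<Sum>i<n. \<Sum>j<n. K (Suc i) j) + (\<Sum>i<n. \<Sum>j<n. H i (Suc j))
      = (\<Sum>i<n. \<Sum>j<n. K i j) + (\<Sum>i<n. \<Sum>j<n. H i j) + (\<Sum>i<n. \<Sum>j<n. E i j)"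
    by (simp only: sum.distrib)
  moreover have "(\<Sum>i<n. \<Sum>j<n. K (Suc i) j) = (\<Sum>i<n. \<Sum>j<n. K i j) + (\<Sum>j<n. K n j)"
    by (simp only: sum.swap[of "\<lambda>i j. K (Suc i) j"] sum.swap[of "\<lambda>i j. K i j"] shift_K sum.distrib)
  moreover have "(\<Sum>i<n. \<Sum>j<n. H i (Suc j)) = (\<Sum>i<n. \<Sum>j<n. H i j) + (\<Sum>i<n. H i n)"
    by (simp only: shift_H sum.distrib)
  ultimately show ?thesis by linarith
qed

lemma sum_Mentry_neg_row:
  assumes w: "w \<in> Bn n" and i: "i < n"
  shows "(\<Sum>j<n. if Mentry w (Suc i) (Suc j) = -1 then 2 else 0) = (if is_barred (w ! i) then (2::nat) else 0)"
proof -
  have val: "1 \<le> letter_val (w ! i)" "letter_val (w ! i) \<le> n" using Bn_letter_val[OF w i] by auto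
  have "Mentry w (Suc i) (Suc j) = -1 \<longleftrightarrow> is_barred (w ! i) \<and> j = letter_val (w ! i) - 1" for j
    using val unfolding Mentry_Suc by (cases "w ! i") auto
  then have "(\<Sum>j<n. if Mentry w (Suc i) (Suc j) = -1 then 2 else 0)
      = (\<Sum>j<n. if j = letter_val (w ! i) - 1 then (if is_barred (w ! i) then 2 else 0) else (0::nat))"
    by (intro sum.cong) auto
  also have "\<dots> = (if is_barred (w ! i) then 2 else 0)"
    using val by (subst sum.delta) auto
  finally show ?thesis .
qed

lemma tc_eq_sum: "w \<in> Bn n \<Longrightarrow> tc w = (\<Sum>i<n. if is_barred (w ! i) then 1 else 0)"
  unfolding tc_def using Bn_length[of w n] by (simp add: length_filter_conv_card card_less_conj_eq_sum)

theorem tc_eq_sp_Pd_Qd: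
  assumes w: "w \<in> Bn n"
  shows "of_nat (tc w) = sp (Pd r w) + sp (Qd r w)"
proof -
  define K where "K i j = vertical_step (grow w r i j) (grow w r i (Suc j))" for i j
  define H where "H i j = vertical_step (grow w r i j) (grow w r (Suc i) j)" for i j
  define E where "E i j = (if Mentry w (Suc i) (Suc j) = -1 then 2 else (0::nat))" for i j
  have "(\<Sum>j<n. K n j) + (\<Sum>i<n. H i n) = (\<Sum>i<n. \<Sum>j<n. E i j)"
  proof (rule grid_sum_telescope)
    fix i j assume "i < n" "j < n"
    then show "K (Suc i) j + H i (Suc j) = K i j + H i j + E i j"
      using grid_rule_output[OF w, of i j r] unfolding rule_output_def K_def H_def E_def by simp
  qed (simp_all add: K_def H_def)
  also have "\<dots> = 2 * tc w"
    unfolding E_def tc_eq_sum[OF w] sum_distrib_left by (intro sum.cong) (simp_all add: sum_Mentry_neg_row[OF w])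
  finally have sum: "(\<Sum>j<n. K n j) + (\<Sum>i<n. H i n) = 2 * tc w" .
  have "sp (Pd r w) + sp (Qd r w) = of_nat ((\<Sum>j<n. K n j) + (\<Sum>i<n. H i n)) / 2"
    unfolding Pd_eq_map[OF Bn_length[OF w]] Qd_eq_map[OF Bn_length[OF w]] sp_map_upt K_def H_def
    by (simp add: add_divide_distrib)
  then show ?thesis unfolding sum by simp
qed

section \<open>Reconstructing the word from a pair of tableaux\<close>

function back_grid :: "nat \<Rightarrow> cells list \<Rightarrow> cells list \<Rightarrow> nat \<Rightarrow> nat \<Rightarrow> cells" where
  "back_grid n P Q i j =
    (if n \<le> i then P ! j else if n \<le> j then Q ! i
     else snd (inverse_rule (back_grid n P Q (Suc i) j) (back_grid n P Q i (Suc j))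
                 (back_grid n P Q (Suc i) (Suc j))))"
  by pat_completeness auto
termination by (relation "measure (\<lambda>(n, P, Q, i, j). (n - i) + (n - j))") auto

declare back_grid.simps [simp del]

definition back_entry :: "nat \<Rightarrow> cells list \<Rightarrow> cells list \<Rightarrow> nat \<Rightarrow> nat \<Rightarrow> int" where
  "back_entry n P Q i j = fst (inverse_rule (back_grid n P Q (Suc i) j) (back_grid n P Q i (Suc j))
                                (back_grid n P Q (Suc i) (Suc j)))"

lemma back_grid_last_row: "back_grid n P Q n j = P ! j"
  by (subst back_grid.simps) simp

lemma back_grid_last_col: "i < n \<Longrightarrow> back_grid n P Q i n = Q ! i"
  by (subst back_grid.simps) simp

lemma back_grid_inner: "i < n \<Longrightarrow> j < n \<Longrightarrow> back_grid n P Q i j = snd (inverse_rule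
    (back_grid n P Q (Suc i) j) (back_grid n P Q i (Suc j)) (back_grid n P Q (Suc i) (Suc j)))"
  by (subst back_grid.simps) simp

lemma grow_eq_back_grid:
  assumes w: "w \<in> Bn n"
  shows "i \<le> n \<Longrightarrow> j \<le> n \<Longrightarrow> grow w r i j = back_grid n (Pd r w) (Qd r w) i j"
proof (induction "(n - i) + (n - j)" arbitrary: i j rule: less_induct)
  case less
  note Pd = Pd_eq_map[OF Bn_length[OF w]] and Qd = Qd_eq_map[OF Bn_length[OF w]]
  consider "i = n" | "i < n" "j = n" | "i < n" "j < n" using less.prems by linarith
  then show ?case
  proof cases
    case 1
    then show ?thesis using less.prems by (simp add: back_grid_last_row Pd del: upt_Suc)
  next
    case 2
    then show ?thesis using less.prems by (simp add: back_grid_last_col Qd del: upt_Suc)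
  next
    case 3
    have "grow w r (Suc i) j = back_grid n (Pd r w) (Qd r w) (Suc i) j"
      "grow w r i (Suc j) = back_grid n (Pd r w) (Qd r w) i (Suc j)"
      "grow w r (Suc i) (Suc j) = back_grid n (Pd r w) (Qd r w) (Suc i) (Suc j)"
      by (rule less.hyps; use 3 in simp)+
    moreover have "inverse_rule (grow w r (Suc i) j) (grow w r i (Suc j)) (grow w r (Suc i) (Suc j))
        = (Mentry w (Suc i) (Suc j), grow w r i j)"
      using grid_rule_output[OF w 3, of r] unfolding rule_output_def by blast
    ultimately show ?thesis using back_grid_inner[OF 3] by simp
  qed
qed

lemma back_entry_eq_Mentry:
  assumes w: "w \<in> Bn n" and ij: "i < n" "j < n"
  shows "back_entry n (Pd r w) (Qd r w) i j = Mentry w (Suc i) (Suc j)"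
proof -
  have "inverse_rule (grow w r (Suc i) j) (grow w r i (Suc j)) (grow w r (Suc i) (Suc j))
      = (Mentry w (Suc i) (Suc j), grow w r i j)"
    using grid_rule_output[OF w ij, of r] unfolding rule_output_def by blast
  then show ?thesis
    unfolding back_entry_def using grow_eq_back_grid[OF w, of "Suc i" j] grow_eq_back_grid[OF w, of i "Suc j"]
      grow_eq_back_grid[OF w, of "Suc i" "Suc j"] ij by (simp del: grow.simps)
qed

lemma Bn_eq_if_Mentry_eq:
  assumes w: "w \<in> Bn n" and w': "w' \<in> Bn n"
    and M: "\<And>i j. i < n \<Longrightarrow> j < n \<Longrightarrow> Mentry w (Suc i) (Suc j) = Mentry w' (Suc i) (Suc j)"
  shows "w = w'"
proof (rule nth_equalityI)
  show "length w = length w'" using Bn_length[OF w] Bn_length[OF w'] by simp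
  fix i assume "i < length w"
  then have i: "i < n" using Bn_length[OF w] by simp
  define v where "v = letter_val (w ! i)"
  have v: "1 \<le> v" "v \<le> n" using Bn_letter_val[OF w i] v_def by auto
  then have "Mentry w' (Suc i) v \<noteq> 0" "Mentry w (Suc i) v = Mentry w' (Suc i) v"
    using Mentry_nonzero_iff[of w i "v - 1"] M[OF i, of "v - 1"] v_def by simp_all
  then have "letter_val (w' ! i) = v" using Mentry_nonzero_iff[of w' i "v - 1"] v by simp
  then show "w ! i = w' ! i"
    using \<open>Mentry w (Suc i) v = Mentry w' (Suc i) v\<close> v_def v
    by (cases "w ! i"; cases "w' ! i") (auto simp: Mentry_def)
qed

theorem inj_on_Pd_Qd: "inj_on (\<lambda>w. (Pd r w, Qd r w)) (Bn n)"
proof (rule inj_onI)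
  fix w w' assume w: "w \<in> Bn n" and w': "w' \<in> Bn n" and eq: "(Pd r w, Qd r w) = (Pd r w', Qd r w')"
  show "w = w'"
  proof (rule Bn_eq_if_Mentry_eq[OF w w'])
    fix i j assume "i < n" "j < n"
    then show "Mentry w (Suc i) (Suc j) = Mentry w' (Suc i) (Suc j)"
      using back_entry_eq_Mentry[OF w] back_entry_eq_Mentry[OF w'] eq by (metis prod.inject)
  qed
qed

definition nonzero_col :: "nat \<Rightarrow> (nat \<Rightarrow> nat \<Rightarrow> int) \<Rightarrow> nat \<Rightarrow> nat" where
  "nonzero_col n m i = (THE j. j < n \<and> m i j \<noteq> 0)"

definition word_of_matrix :: "nat \<Rightarrow> (nat \<Rightarrow> nat \<Rightarrow> int) \<Rightarrow> letter list" where
  "word_of_matrix n m = map (\<lambda>i. let j = nonzero_col n m i in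
     if m i j = 1 then Unb (Suc j) else Bar (Suc j)) [0..<n]"

lemma card_eq_1_imp_ex1:
  assumes "card {j. j < (n::nat) \<and> P j} = 1"
  shows "\<exists>!j. j < n \<and> P j"
proof -
  obtain x where "{j. j < n \<and> P j} = {x}" using assms by (rule card_1_singletonE)
  then show ?thesis by (metis (mono_tags, lifting) mem_Collect_eq singletonD singletonI)
qed

lemma nonzero_col:
  assumes "card {j. j < n \<and> m i j \<noteq> 0} = 1"
  shows "nonzero_col n m i < n" "m i (nonzero_col n m i) \<noteq> 0"
    and "\<And>j. j < n \<Longrightarrow> m i j \<noteq> 0 \<Longrightarrow> j = nonzero_col n m i"
proof -
  note ex1 = card_eq_1_imp_ex1[of n "\<lambda>j. m i j \<noteq> 0", OF assms]
  show "nonzero_col n m i < n" "m i (nonzero_col n m i) \<noteq> 0"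
    using theI'[OF ex1] unfolding nonzero_col_def by simp_all
  show "\<And>j. j < n \<Longrightarrow> m i j \<noteq> 0 \<Longrightarrow> j = nonzero_col n m i"
    using the1_equality[OF ex1] unfolding nonzero_col_def by simp
qed

lemma letter_val_word_of_matrix: "i < n \<Longrightarrow> letter_val (word_of_matrix n m ! i) = Suc (nonzero_col n m i)"
  unfolding word_of_matrix_def by (simp add: Let_def)

lemma word_of_matrix_in_Bn:
  assumes rows: "\<And>i. i < n \<Longrightarrow> card {j. j < n \<and> m i j \<noteq> 0} = 1"
    and cols: "\<And>j. j < n \<Longrightarrow> card {i. i < n \<and> m i j \<noteq> 0} = 1"
  shows "word_of_matrix n m \<in> Bn n"
  unfolding Bn_def
proof (intro CollectI conjI ballI)
  let ?w = "word_of_matrix n m"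
  show "length ?w = n" unfolding word_of_matrix_def by simp
  show "set (map letter_val ?w) \<subseteq> {1..n}"
  proof
    fix x assume "x \<in> set (map letter_val ?w)"
    then obtain i where "i < n" "x = letter_val (?w ! i)"
      using \<open>length ?w = n\<close> by (auto simp: in_set_conv_nth)
    then show "x \<in> {1..n}"
      using letter_val_word_of_matrix nonzero_col(1)[of n m i, OF rows] by (simp add: Suc_le_eq)
  qed
  fix k assume k: "k \<in> {1..n}"
  have "letter_val (?w ! i) = k \<longleftrightarrow> m i (k - 1) \<noteq> 0" if "i < n" for i
  proof
    assume "letter_val (?w ! i) = k"
    then have "nonzero_col n m i = k - 1" using letter_val_word_of_matrix[OF that] by simp
    then show "m i (k - 1) \<noteq> 0" using nonzero_col(2)[of n m i, OF rows[OF that]] by simp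
  next
    assume "m i (k - 1) \<noteq> 0"
    moreover have "k - 1 < n" using k by auto
    ultimately have "k - 1 = nonzero_col n m i" by (rule nonzero_col(3)[of n m i, OF rows[OF that], rotated])
    moreover have "1 \<le> k" using k by simp
    ultimately show "letter_val (?w ! i) = k" using letter_val_word_of_matrix[OF that, of m] by linarith
  qed
  then have "{i. i < n \<and> letter_val (?w ! i) = k} = {i. i < n \<and> m i (k - 1) \<noteq> 0}" by blast
  moreover have "k - 1 < n" using k by auto
  ultimately show "length (filter (\<lambda>x. letter_val x = k) ?w) = 1"
    using cols[of "k - 1"] \<open>length ?w = n\<close> by (simp add: length_filter_conv_card)
qed

lemma Mentry_word_of_matrix:
  assumes range: "m i j \<in> {-1, 0, 1}" and row: "card {j. j < n \<and> m i j \<noteq> 0} = 1"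
    and ij: "i < n" "j < n"
  shows "Mentry (word_of_matrix n m) (Suc i) (Suc j) = m i j"
proof (cases "j = nonzero_col n m i")
  case True
  then consider "m i j = 1" | "m i j = -1" using range nonzero_col(2)[of n m i, OF row] by fastforce
  then show ?thesis using True ij(1) unfolding Mentry_Suc word_of_matrix_def by cases simp_all
next
  case False
  then have "m i j = 0" using nonzero_col(3)[of n m i, OF row ij(2)] by blast
  moreover have "letter_val (word_of_matrix n m ! i) \<noteq> Suc j"
    using letter_val_word_of_matrix[OF ij(1)] False by simp
  ultimately show ?thesis unfolding Mentry_Suc by (cases "word_of_matrix n m ! i") auto
qed

lemma domino_step_delta_eq: "domino_step la (delta r) \<Longrightarrow> is_partition la \<Longrightarrow> la = delta r"
  using delta_irreducible[of r la] partition_delta unfolding domino_step_def domino_removal_def by auto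

lemma card_nonzero_eq_1_if_size_gap:
  fixes f g :: "nat \<Rightarrow> nat" and m :: "nat \<Rightarrow> int"
  assumes start: "f 0 = g 0" and finish: "g n = f n + 2"
    and step: "\<And>j. j < n \<Longrightarrow> g (Suc j) + f j = f (Suc j) + g j + (if m j = 0 then 0 else 2)"
  shows "card {j. j < n \<and> m j \<noteq> 0} = 1"
proof -
  have "int (g j) - int (f j) = 2 * int (card {j'. j' < j \<and> m j' \<noteq> 0})" if "j \<le> n" for j
    using that
  proof (induction j)
    case (Suc j)
    then show ?case using step[of j] by (simp add: card_less_Suc_conj split: if_splits)
  qed (simp add: start)
  from this[of n] show ?thesis using finish by simp
qed

locale SDT_pair =
  fixes r n :: nat and la :: cells and P Q :: "cells list"
  assumes shape: "la \<in> Pr r n" and P: "is_SDT r la P" and Q: "is_SDT r la Q"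
begin

abbreviation "B \<equiv> back_grid n P Q"

lemma card_shape: "card la = card (delta r) + 2 * n"
  using shape unfolding Pr_def by simp

lemmas P_nth = is_SDT_nth[OF P card_shape] and Q_nth = is_SDT_nth[OF Q card_shape]

lemma B_last_col: "i \<le> n \<Longrightarrow> B i n = Q ! i"
  using back_grid_last_col[of i n P Q] back_grid_last_row[of n P Q n] P_nth(3) Q_nth(3)
  by (cases "i = n") simp_all

definition B_inv :: "nat \<Rightarrow> nat \<Rightarrow> bool" where
  "B_inv i j \<longleftrightarrow> is_partition (B i j) \<and> (i < n \<longrightarrow> domino_step (B i j) (B (Suc i) j))
     \<and> (j < n \<longrightarrow> domino_step (B i j) (B i (Suc j)))"

lemma B_square:
  assumes ij: "i < n" "j < n" and inv: "B_inv (Suc i) j" "B_inv i (Suc j)" "B_inv (Suc i) (Suc j)"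
  shows "rule_input (back_entry n P Q i j) (B i j) (B (Suc i) j) (B i (Suc j))
    \<and> local_rule (back_entry n P Q i j) (B i j) (B (Suc i) j) (B i (Suc j)) = B (Suc i) (Suc j)"
  using inverse_rule_correct[of "B (Suc i) j" "B i (Suc j)" "B (Suc i) (Suc j)"] inv ij
  unfolding back_grid_inner[OF ij] back_entry_def B_inv_def by simp

lemma B_inv_all: "i \<le> n \<Longrightarrow> j \<le> n \<Longrightarrow> B_inv i j"
proof (induction "(n - i) + (n - j)" arbitrary: i j rule: less_induct)
  case less
  consider "i = n" | "i < n" "j = n" | "i < n" "j < n" using less.prems by linarith
  then show ?case
  proof cases
    case 1
    then show ?thesis unfolding B_inv_def using back_grid_last_row P_nth(4,5) less.prems by simp
  next
    case 2
    then show ?thesis unfolding B_inv_def using B_last_col Q_nth(4,5) by simp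
  next
    case 3
    have "B_inv (Suc i) j" "B_inv i (Suc j)" "B_inv (Suc i) (Suc j)"
      by (rule less.hyps; use 3 in simp)+
    then show ?thesis using B_square[OF 3] unfolding rule_input_def B_inv_def by simp
  qed
qed

lemma B_rule: "i < n \<Longrightarrow> j < n \<Longrightarrow> rule_input (back_entry n P Q i j) (B i j) (B (Suc i) j) (B i (Suc j))
    \<and> local_rule (back_entry n P Q i j) (B i j) (B (Suc i) j) (B i (Suc j)) = B (Suc i) (Suc j)"
  using B_square B_inv_all by simp

lemma B_first_row: "j \<le> n \<Longrightarrow> B 0 j = delta r"
proof (induction "n - j" arbitrary: j)
  case 0
  then show ?case using B_last_col[of 0] Q_nth(2) by simp
next
  case (Suc k)
  then have "B 0 (Suc j) = delta r" "j < n" by simp_all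
  then show ?case using B_inv_all[of 0 j] domino_step_delta_eq unfolding B_inv_def by simp
qed

lemma B_first_col: "i \<le> n \<Longrightarrow> B i 0 = delta r"
proof (induction "n - i" arbitrary: i)
  case 0
  then show ?case using back_grid_last_row P_nth(2) by simp
next
  case (Suc k)
  then have "B (Suc i) 0 = delta r" "i < n" by simp_all
  then show ?case using B_inv_all[of i 0] domino_step_delta_eq unfolding B_inv_def by simp
qed

lemma B_square_card:
  assumes "i < n" "j < n"
  shows "card (B (Suc i) (Suc j)) + card (B i j)
    = card (B (Suc i) j) + card (B i (Suc j)) + (if back_entry n P Q i j = 0 then 0 else 2)"
  using local_rule_output[of "back_entry n P Q i j" "B i j" "B (Suc i) j" "B i (Suc j)"] B_rule[OF assms]
  unfolding rule_output_def by auto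

lemma back_entry_row:
  assumes i: "i < n"
  shows "card {j. j < n \<and> back_entry n P Q i j \<noteq> 0} = 1"
proof (rule card_nonzero_eq_1_if_size_gap[where f = "\<lambda>j. card (B i j)" and g = "\<lambda>j. card (B (Suc i) j)"])
  fix j assume "j < n"
  then show "card (B (Suc i) (Suc j)) + card (B i j)
      = card (B i (Suc j)) + card (B (Suc i) j) + (if back_entry n P Q i j = 0 then 0 else 2)"
    using B_square_card[OF i] by simp
qed (use i B_first_col B_last_col Q_nth(6) in simp_all)

lemma back_entry_col:
  assumes j: "j < n"
  shows "card {i. i < n \<and> back_entry n P Q i j \<noteq> 0} = 1"
proof (rule card_nonzero_eq_1_if_size_gap[where f = "\<lambda>i. card (B i j)" and g = "\<lambda>i. card (B i (Suc j))"])
  fix i assume "i < n"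
  then show "card (B (Suc i) (Suc j)) + card (B i j)
      = card (B (Suc i) j) + card (B i (Suc j)) + (if back_entry n P Q i j = 0 then 0 else 2)"
    using B_square_card[OF _ j] by simp
qed (use j B_first_row back_grid_last_row P_nth(6) in simp_all)

definition word :: "letter list" where
  "word = word_of_matrix n (back_entry n P Q)"

lemma word_in_Bn: "word \<in> Bn n"
  unfolding word_def by (rule word_of_matrix_in_Bn[OF back_entry_row back_entry_col])

lemma Mentry_word:
  assumes ij: "i < n" "j < n"
  shows "Mentry word (Suc i) (Suc j) = back_entry n P Q i j"
proof -
  have "back_entry n P Q i j \<in> {-1, 0, 1}" using B_rule[OF ij] unfolding rule_input_def by blast
  then show ?thesis
    unfolding word_def by (rule Mentry_word_of_matrix[where m = "back_entry n P Q", OF _ back_entry_row[OF ij(1)] ij])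
qed

lemma grow_word: "i \<le> n \<Longrightarrow> j \<le> n \<Longrightarrow> grow word r i j = B i j"
proof (induction i arbitrary: j)
  case 0
  then show ?case using B_first_row by simp
next
  case (Suc i)
  note outer = Suc.IH and i = Suc.prems(1)
  show ?case using Suc.prems(2)
  proof (induction j)
    case 0
    then show ?case using B_first_col i by simp
  next
    case (Suc j)
    then show ?case
      using outer[of j] outer[of "Suc j"] Mentry_word B_rule i by (simp del: grow.simps add: grow_Suc_Suc)
  qed
qed

lemma Pd_word: "Pd r word = P" and Qd_word: "Qd r word = Q"
  using grow_word back_grid_last_row B_last_col P_nth(1) Q_nth(1)
  by (simp_all add: Pd_eq_map Qd_eq_map Bn_length[OF word_in_Bn] list_eq_iff_nth_eq del: upt_Suc)

end

theorem Pd_Qd_surj: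
  assumes "la \<in> Pr r n" "is_SDT r la P" "is_SDT r la Q"
  shows "\<exists>w\<in>Bn n. Pd r w = P \<and> Qd r w = Q"
proof -
  interpret SDT_pair r n la P Q using assms by unfold_locales
  show ?thesis using word_in_Bn Pd_word Qd_word by blast
qed

theorem theorem2p2:
  fixes r n :: nat
  shows "bij_betw (\<lambda>w. (Pd r w, Qd r w)) (Bn n)
           {(P, Q). \<exists>la \<in> Pr r n. is_SDT r la P \<and> is_SDT r la Q}
         \<and> (\<forall>w \<in> Bn n. of_nat (tc w) = sp (Pd r w) + sp (Qd r w))"
proof (intro conjI ballI bij_betw_imageI inj_on_Pd_Qd)
  show "(\<lambda>w. (Pd r w, Qd r w)) ` Bn n = {(P, Q). \<exists>la \<in> Pr r n. is_SDT r la P \<and> is_SDT r la Q}"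
    using grow_shape_in_Pr Pd_is_SDT Qd_is_SDT Pd_Qd_surj by fastforce
qed (rule tc_eq_sp_Pd_Qd)

end
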